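(* Let $V:[0,+\infty)\to[0,+\infty)$ be a $C^1$ strictly increasing function with $\lim_{t\to\infty}V(t)=+\infty$, and let $S:=V'$. Let $(X,\mathsf d,\mathfrak m)$ be a metric measure space admitting the generalized asymptotic volume ratio $\mathrm{AVR}^V_{(X,\mathsf d,\mathfrak m)}$ associated to $V$, and suppose there is a constant $k>0$ such that $\mathfrak m(B_r(x))\le k\,V(r)$ for every $x\in X$ and every sufficiently large $r>0$. Let $(\rho_n)_{n\in\mathbb N}$ be mollifiers of radial type satisfying approximation of the identity of radial type associated to $V$. Let $p\ge 1$ and for $u\in L^p(X,\mathfrak m)$ set \[ \mathcal E_n(u):=\iint_{\{(x,y)\in X\times X:\,x\neq y\}}|u(x)-u(y)|^p\rho_n(x,y)\,\mathrm d\mathfrak m(x)\,\mathrm d\mathfrak m(y). \] Then for every $u\in L^p(X,\mathfrak m)$ such that $\mathcal E_{n_0}(u)<+\infty$ for some $n_0\in\mathbb N$, \[ \lim_{n\to\infty}\mathcal E_n(u)=2\,\mathrm{AVR}^V_{(X,\mathsf d,\mathfrak m)}\,\|u\|^p_{L^p}. \]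
   Context: A metric measure space is a triple $(X,\mathsf d,\mathfrak m)$ with $(X,\mathsf d)$ complete and separable and $\mathfrak m$ a locally finite non-negative Borel measure with full support. $(X,\mathsf d,\mathfrak m)$ admits the generalized asymptotic volume ratio associated to $V$ if there is $\mathrm{AVR}^V_{(X,\mathsf d,\mathfrak m)}\in[0,+\infty]$ such that for every $x_0\in X$, $\mathrm{AVR}^V_{(X,\mathsf d,\mathfrak m)}=\lim_{r\to+\infty}\mathfrak m(B_r(x_0))/V(r)$. Functions $\rho_n$ on $\{(x,y):x\neq y\}$ satisfy approximation of the identity of radial type associated to $V$ if there is a sequence of strictly decreasing functions $\tilde\rho_n\in C^1(0,+\infty)$ such that: (i) $\lim_{n\to\infty}\tilde\rho_n(r)=0$ for all $r>0$; $\lim_{r\to+\infty}\tilde\rho_n(r)V(r)=0$ for all $n$; and $\rho_n(x,y)=\tilde\rho_n(\mathsf d(x,y))$ for all $x\neq y$; (ii) for all $n>m$, $r\mapsto\tilde\rho_n(r)/\tilde\rho_m(r)$ is non-decreasing on $(0,+\infty)$; (iii) $\lim_{R\to+\infty}\lim_{n\to\infty}\int_R^{+\infty}S(r)\tilde\rho_n(r)\,\mathrm dr=1$. *)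

theory Defs
  imports "HOL-Analysis.Analysis"
begin

text \<open>A metric measure space: the metric space is the type (class polish_space,
i.e. complete and separable), the measure is a Borel measure which is locally finite
and has full support.\<close>
definition mms :: "('a::{polish_space,metric_space}) measure \<Rightarrow> bool" where
  "mms M \<longleftrightarrow> sets M = sets borel
     \<and> (\<forall>x. \<exists>r>0. emeasure M (ball x r) < \<infinity>)
     \<and> (\<forall>U. open U \<and> U \<noteq> {} \<longrightarrow> emeasure M U > 0)"

definition admissible_V :: "(real \<Rightarrow> real) \<Rightarrow> (real \<Rightarrow> real) \<Rightarrow> bool" where
  "admissible_V V S \<longleftrightarrow>
     (\<forall>t\<ge>0. V t \<ge> 0)
     \<and> (\<forall>t\<ge>0. (V has_real_derivative S t) (at t within {0..}))
     \<and> continuous_on {0..} S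
     \<and> strict_mono_on {0..} V
     \<and> filterlim V at_top at_top"

definition has_AVR :: "('a::metric_space) measure \<Rightarrow> (real \<Rightarrow> real) \<Rightarrow> ennreal \<Rightarrow> bool" where
  "has_AVR M V A \<longleftrightarrow>
     (\<forall>x0. ((\<lambda>r. emeasure M (ball x0 r) / ennreal (V r)) \<longlongrightarrow> A) at_top)"

definition approx_identity_radial ::
  "(real \<Rightarrow> real) \<Rightarrow> (real \<Rightarrow> real) \<Rightarrow> (nat \<Rightarrow> 'a::metric_space \<Rightarrow> 'a \<Rightarrow> real) \<Rightarrow> bool" where
  "approx_identity_radial V S \<rho> \<longleftrightarrow>
     (\<exists>\<rho>t :: nat \<Rightarrow> real \<Rightarrow> real.
        (\<forall>n. \<rho>t n C1_differentiable_on {0<..})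
      \<and> (\<forall>n r s. 0 < r \<longrightarrow> r < s \<longrightarrow> \<rho>t n s < \<rho>t n r)
      \<and> (\<forall>r>0. (\<lambda>n. \<rho>t n r) \<longlonglongrightarrow> 0)
      \<and> (\<forall>n. ((\<lambda>r. \<rho>t n r * V r) \<longlongrightarrow> 0) at_top)
      \<and> (\<forall>n x y. x \<noteq> y \<longrightarrow> \<rho> n x y = \<rho>t n (dist x y))
      \<and> (\<forall>n m. n > m \<longrightarrow> mono_on {0<..} (\<lambda>r. \<rho>t n r / \<rho>t m r))
      \<and> (\<exists>L :: real \<Rightarrow> ennreal.
           (\<forall>\<^sub>F R in at_top.
              ((\<lambda>n. \<integral>\<^sup>+ r. ennreal (S r * \<rho>t n r) * indicator {R..} r \<partial>lborel)
                 \<longlongrightarrow> L R) sequentially)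
           \<and> (L \<longlongrightarrow> 1) at_top))"

definition energy :: "('a::metric_space) measure \<Rightarrow> real \<Rightarrow> ('a \<Rightarrow> 'a \<Rightarrow> real) \<Rightarrow> ('a \<Rightarrow> real) \<Rightarrow> ennreal" where
  "energy M p \<rho> u =
     (\<integral>\<^sup>+ z. ennreal (\<bar>u (fst z) - u (snd z)\<bar> powr p * \<rho> (fst z) (snd z))
              * indicator {z. fst z \<noteq> snd z} z \<partial>(M \<Otimes>\<^sub>M M))"

definition in_Lp :: "'a measure \<Rightarrow> real \<Rightarrow> ('a \<Rightarrow> real) \<Rightarrow> bool" where
  "in_Lp M p u \<longleftrightarrow> u \<in> borel_measurable M \<and> (\<integral>\<^sup>+ x. ennreal (\<bar>u x\<bar> powr p) \<partial>M) < \<infinity>"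

definition Lp_norm_pow :: "'a measure \<Rightarrow> real \<Rightarrow> ('a \<Rightarrow> real) \<Rightarrow> ennreal" where
  "Lp_norm_pow M p u = (\<integral>\<^sup>+ x. ennreal (\<bar>u x\<bar> powr p) \<partial>M)"

end

theory Submission
  imports Defs
begin

text \<open>
  Split E_n(u) at a large radius R. Because rho_n / rho_n0 is nondecreasing, the pairs with
  d(x,y) <= R contribute at most rho_n(R) / rho_n0(R) times their finite contribution to
  E_n0(u), which tends to 0. For the other pairs, writing rho_n(r) as the integral of -rho_n'
  over (r, oo) and applying Tonelli expresses the tail mass
  Phi_n(x) = integral of rho_n(d(x,y)) over {y. d(x,y) > R} through the measures of annuli
  around x. Comparing m(B_t(x)) with AVR V(t) and integrating by parts (V' = S) gives
  Phi_n(x) -> AVR for every x, with a bound uniform in x coming from m(B_t(x)) <= k V(t).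
  Finally |a - b|^p <= (1+e)^(p-1) |a|^p + (1+1/e)^(p-1) |b|^p: pairs with a point outside a
  large ball B contribute like |u(x)|^p + |u(y)|^p because u has little mass outside B, while
  on B x B the truncated kernel is at most rho_n(R) -> 0. So the far part tends to
  2 AVR ||u||_p^p.
\<close>

section \<open>A weighted convexity inequality\<close>

lemma powr_add_le_weighted:
  fixes x y d p :: real
  assumes p: "p \<ge> 1" and d: "d > 0" and x: "x \<ge> 0" and y: "y \<ge> 0"
  shows "(x + y) powr p \<le> (1 + d) powr (p - 1) * x powr p + (1 + 1/d) powr (p - 1) * y powr p"
proof (cases "x = 0 \<or> y = 0")
  case True
  have "1 \<le> (1 + d) powr (p - 1)" "1 \<le> (1 + 1/d) powr (p - 1)"
    using p d by (auto intro: ge_one_powr_ge_zero)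
  with True x y show ?thesis
    by (auto intro: order_trans[OF _ mult_right_mono] simp: mult_le_cancel_right1 powr_nonneg_iff)
next
  case False
  let ?l = "1 / (1 + d)" and ?c = "(1 + d) / d"
  have l: "0 \<le> ?l" "?l \<le> 1" and l': "1 - ?l = 1 / ?c" and c: "1 + 1/d = ?c" "?c > 0"
    using d by (auto simp: field_simps)
  have scale: "1 / a * (a * z) powr p = a powr (p - 1) * z powr p" if "a > 0" "z > 0" for a z
    using that by (simp add: powr_mult powr_diff)
  have "(1 - ?l) * (?c * y) + ?l * ((1 + d) * x) = x + y"
    unfolding l' using c(2) d by simp
  then have "(x + y) powr p = ((1 - ?l) * (?c * y) + ?l * ((1 + d) * x)) powr p"
    by simp
  also have "\<dots> \<le> (1 - ?l) * (?c * y) powr p + ?l * ((1 + d) * x) powr p"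
    using convex_onD[OF powr_convex[OF p] l, of "?c * y" "(1 + d) * x"] False x y d by simp
  also have "\<dots> = (1 + d) powr (p - 1) * x powr p + (1 + 1/d) powr (p - 1) * y powr p"
    unfolding l' c(1) using scale[of ?c y] scale[of "1 + d" x] False x y d by simp
  finally show ?thesis .
qed

lemma abs_diff_powr_le_weighted:
  fixes a b d p :: real
  assumes "p \<ge> 1" "d > 0"
  shows "\<bar>a - b\<bar> powr p \<le> (1 + d) powr (p - 1) * \<bar>a\<bar> powr p + (1 + 1/d) powr (p - 1) * \<bar>b\<bar> powr p"
proof -
  have "\<bar>a - b\<bar> powr p \<le> (\<bar>a\<bar> + \<bar>b\<bar>) powr p"
    using assms by (intro powr_mono2) auto
  also have "\<dots> \<le> (1 + d) powr (p - 1) * \<bar>a\<bar> powr p + (1 + 1/d) powr (p - 1) * \<bar>b\<bar> powr p"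
    using assms by (intro powr_add_le_weighted) auto
  finally show ?thesis .
qed

lemma Limsup_le_limit:
  fixes X U :: "'b \<Rightarrow> 'a::{complete_linorder,linorder_topology}"
  assumes "F \<noteq> bot" "eventually (\<lambda>n. X n \<le> U n) F" "(U \<longlongrightarrow> u) F"
  shows "Limsup F X \<le> u"
  using Limsup_mono[OF assms(2)] lim_imp_Limsup[OF assms(1,3)] by simp

lemma Liminf_cmult_ennreal:
  fixes c :: ennreal
  assumes "F \<noteq> bot" "c < top"
  shows "Liminf F (\<lambda>n. c * X n) = c * Liminf F X"
proof (rule Liminf_compose_continuous_mono[OF _ _ assms(1)])
  show "continuous_on UNIV ((*) c)"
    using ennreal_continuous_on_cmult[OF assms(2) continuous_on_id] by simp
  show "mono ((*) c)"
    by (simp add: monoI mult_left_mono)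
qed

lemma limit_le_Liminf_add_ennreal:
  fixes X Y E :: "'b \<Rightarrow> ennreal"
  assumes F: "F \<noteq> bot" and le: "eventually (\<lambda>n. Y n \<le> X n + E n) F"
    and Y: "(Y \<longlongrightarrow> y) F" and E: "(E \<longlongrightarrow> e) F"
  shows "y \<le> Liminf F X + e"
proof (rule ennreal_le_epsilon)
  fix \<epsilon> :: real assume "Liminf F X + e < top" "0 < \<epsilon>"
  then have e: "e < e + ennreal \<epsilon>"
    by (cases e) (auto simp: ennreal_less_iff simp flip: ennreal_plus)
  have "eventually (\<lambda>n. Y n \<le> X n + (e + ennreal \<epsilon>)) F"
    using le order_tendstoD(2)[OF E e] by eventually_elim (meson add_left_mono less_imp_le order_trans)
  then have "Liminf F Y \<le> Liminf F (\<lambda>n. X n + (e + ennreal \<epsilon>))"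
    by (rule Liminf_mono)
  then show "y \<le> Liminf F X + e + ennreal \<epsilon>"
    using lim_imp_Liminf[OF F Y] Liminf_add_const[OF F, of X "e + ennreal \<epsilon>"]
    by (simp add: add.assoc)
qed

lemma tendsto_of_Limsup_le_Liminf:
  fixes X :: "'b \<Rightarrow> 'a::{complete_linorder,linorder_topology}"
  assumes "F \<noteq> bot" "Limsup F X \<le> l" "l \<le> Liminf F X"
  shows "(X \<longlongrightarrow> l) F"
  using Liminf_le_Limsup[of F X] assms
  by (intro Liminf_eq_Limsup) (auto intro: antisym)

lemma borel_measurable_continuous_on_ennreal_indicator:
  fixes g :: "'a::topological_space \<Rightarrow> real"
  assumes "continuous_on U g" "U \<in> sets borel" "X \<subseteq> U" "X \<in> sets borel"
  shows "(\<lambda>t. ennreal (g t) * indicator X t) \<in> borel_measurable borel"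
proof -
  have "(\<lambda>t. ennreal (indicator U t *\<^sub>R g t) * indicator X t) \<in> borel_measurable borel"
    using borel_measurable_continuous_on_indicator[OF assms(2,1)] assms(4) by measurable
  also have "(\<lambda>t. ennreal (indicator U t *\<^sub>R g t) * indicator X t) = (\<lambda>t. ennreal (g t) * indicator X t)"
    using assms(3) by (auto simp: fun_eq_iff split: split_indicator)
  finally show ?thesis .
qed

lemma nn_integral_swap_less:
  fixes f g :: "real \<Rightarrow> ennreal"
  assumes [measurable]: "f \<in> borel_measurable borel" "g \<in> borel_measurable borel"
  shows "(\<integral>\<^sup>+t. f t * (\<integral>\<^sup>+s. g s * indicator {..<t} s \<partial>lborel) \<partial>lborel)
       = (\<integral>\<^sup>+s. g s * (\<integral>\<^sup>+t. f t * indicator {s<..} t \<partial>lborel) \<partial>lborel)"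
proof -
  have [measurable]: "(\<lambda>(t, s). f t * (g s * indicator {..<t} s)) \<in> borel_measurable (lborel \<Otimes>\<^sub>M lborel)"
  proof -
    have "(\<lambda>z. f (fst z) * (g (snd z) * indicator {z. snd z < fst z} z)) \<in> borel_measurable (lborel \<Otimes>\<^sub>M lborel)"
      by measurable
    then show ?thesis by (simp add: case_prod_unfold indicator_def)
  qed
  have "(\<integral>\<^sup>+t. f t * (\<integral>\<^sup>+s. g s * indicator {..<t} s \<partial>lborel) \<partial>lborel)
      = (\<integral>\<^sup>+t. \<integral>\<^sup>+s. f t * (g s * indicator {..<t} s) \<partial>lborel \<partial>lborel)"
    by (simp add: nn_integral_cmult)
  also have "\<dots> = (\<integral>\<^sup>+s. \<integral>\<^sup>+t. f t * (g s * indicator {..<t} s) \<partial>lborel \<partial>lborel)"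
    by (rule lborel_pair.Fubini'[symmetric]) measurable
  also have "\<dots> = (\<integral>\<^sup>+s. g s * (\<integral>\<^sup>+t. f t * indicator {s<..} t \<partial>lborel) \<partial>lborel)"
    by (intro nn_integral_cong) (simp add: nn_integral_cmult[symmetric] ac_simps indicator_def)
  finally show ?thesis .
qed

lemma (in sigma_finite_measure) nn_integral_symmetric_kernel:
  assumes [measurable]: "k \<in> borel_measurable (M \<Otimes>\<^sub>M M)" "h \<in> borel_measurable M"
    and sym: "\<And>x y. k (x, y) = k (y, x)"
  shows "(\<integral>\<^sup>+z. k z * (h (fst z) + h (snd z)) \<partial>(M \<Otimes>\<^sub>M M)) = 2 * (\<integral>\<^sup>+x. h x * (\<integral>\<^sup>+y. k (x, y) \<partial>M) \<partial>M)"
proof -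
  note k_x = measurable_Pair2[OF assms(1)]
  have "(\<integral>\<^sup>+z. k z * h (fst z) \<partial>(M \<Otimes>\<^sub>M M)) = (\<integral>\<^sup>+x. \<integral>\<^sup>+y. k (x, y) * h x \<partial>M \<partial>M)"
    using nn_integral_fst[where f="\<lambda>z. k z * h (fst z)"] by simp
  also have "\<dots> = (\<integral>\<^sup>+x. h x * (\<integral>\<^sup>+y. k (x, y) \<partial>M) \<partial>M)"
    by (intro nn_integral_cong) (simp add: nn_integral_cmult k_x mult.commute)
  finally have fst: "(\<integral>\<^sup>+z. k z * h (fst z) \<partial>(M \<Otimes>\<^sub>M M)) = (\<integral>\<^sup>+x. h x * (\<integral>\<^sup>+y. k (x, y) \<partial>M) \<partial>M)" .
  interpret pair_sigma_finite M M ..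
  have "(\<integral>\<^sup>+z. k z * h (snd z) \<partial>(M \<Otimes>\<^sub>M M)) = (\<integral>\<^sup>+y. \<integral>\<^sup>+x. k (x, y) * h y \<partial>M \<partial>M)"
    using nn_integral_snd[of "\<lambda>z. k z * h (snd z)"] by simp
  also have "\<dots> = (\<integral>\<^sup>+x. h x * (\<integral>\<^sup>+y. k (x, y) \<partial>M) \<partial>M)"
    by (intro nn_integral_cong) (simp add: nn_integral_cmult k_x mult.commute sym[of _ x for x])
  finally have snd: "(\<integral>\<^sup>+z. k z * h (snd z) \<partial>(M \<Otimes>\<^sub>M M)) = (\<integral>\<^sup>+x. h x * (\<integral>\<^sup>+y. k (x, y) \<partial>M) \<partial>M)" .
  from fst snd show ?thesis
    by (simp add: distrib_left nn_integral_add mult_2)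
qed

lemma nn_integral_ball_exhaustion:
  fixes h :: "'a::metric_space \<Rightarrow> ennreal"
  assumes [measurable]: "h \<in> borel_measurable M" and sets: "sets M = sets borel"
    and fin: "integral\<^sup>N M h < \<infinity>"
  shows "(\<lambda>m. \<integral>\<^sup>+x. h x * indicator (ball x0 (real m)) x \<partial>M) \<longlonglongrightarrow> integral\<^sup>N M h"
    and "(\<lambda>m. \<integral>\<^sup>+x. h x * indicator (- ball x0 (real m)) x \<partial>M) \<longlonglongrightarrow> 0"
proof -
  have [measurable]: "ball x0 r \<in> sets M" "- ball x0 r \<in> sets M" for r
    using sets by auto
  have eventually_in: "eventually (\<lambda>m. x \<in> ball x0 (real m)) sequentially" for x :: 'a
  proof -
    obtain N :: nat where N: "dist x0 x < N"
      using reals_Archimedean2 by blast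
    show ?thesis
      by (rule eventually_mono[OF eventually_ge_at_top[of N]]) (use N in auto)
  qed
  have "(\<lambda>m. h x * indicator (ball x0 (real m)) x) \<longlonglongrightarrow> h x"
    and "(\<lambda>m. h x * indicator (- ball x0 (real m)) x) \<longlonglongrightarrow> 0" for x
    by (rule tendsto_eventually, rule eventually_mono[OF eventually_in[of x]], simp)+
  note pointwise = AE_I2[OF this(1)] AE_I2[OF this(2)]
  show "(\<lambda>m. \<integral>\<^sup>+x. h x * indicator (ball x0 (real m)) x \<partial>M) \<longlonglongrightarrow> integral\<^sup>N M h"
    by (rule nn_integral_dominated_convergence[where w=h])
       (use fin pointwise in \<open>auto split: split_indicator\<close>)
  have "(\<lambda>m. \<integral>\<^sup>+x. h x * indicator (- ball x0 (real m)) x \<partial>M) \<longlonglongrightarrow> (\<integral>\<^sup>+x. 0 \<partial>M)"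
    by (rule nn_integral_dominated_convergence[where w=h])
       (use fin pointwise in \<open>auto split: split_indicator\<close>)
  then show "(\<lambda>m. \<integral>\<^sup>+x. h x * indicator (- ball x0 (real m)) x \<partial>M) \<longlonglongrightarrow> 0"
    by simp
qed

section \<open>Radial profiles\<close>

lemma DERIV_nonneg_if_increasing_right:
  fixes f :: "real \<Rightarrow> real"
  assumes "(f has_real_derivative f') (at x)" and "\<And>y. x < y \<Longrightarrow> f x < f y"
  shows "0 \<le> f'"
proof (rule ccontr)
  assume "\<not> 0 \<le> f'"
  with DERIV_neg_dec_right[OF assms(1)] obtain d where "d > 0" "\<And>h. 0 < h \<Longrightarrow> h < d \<Longrightarrow> f (x + h) < f x"
    by auto
  then have "f (x + d/2) < f x"
    by simp
  with assms(2)[of "x + d/2"] \<open>d > 0\<close> show False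
    by simp
qed

text \<open>\<open>rt n\<close> is the profile rho_n of the kernel, \<open>D n\<close> its derivative, and \<open>L R\<close> the limit
  as n -> oo of the integral of S rho_n over [R, oo).\<close>

locale radial_profile =
  fixes V S :: "real \<Rightarrow> real" and rt D :: "nat \<Rightarrow> real \<Rightarrow> real" and L :: "real \<Rightarrow> ennreal"
  assumes V_nonneg: "\<And>t. t \<ge> 0 \<Longrightarrow> V t \<ge> 0"
    and V_deriv: "\<And>t. t > 0 \<Longrightarrow> (V has_real_derivative S t) (at t)"
    and S_cont: "continuous_on {0<..} S"
    and V_strict_mono: "strict_mono_on {0..} V"
    and rt_deriv: "\<And>n t. t > 0 \<Longrightarrow> (rt n has_real_derivative D n t) (at t)"
    and D_cont: "\<And>n. continuous_on {0<..} (D n)"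
    and rt_decreasing: "\<And>n r s. 0 < r \<Longrightarrow> r < s \<Longrightarrow> rt n s < rt n r"
    and rt_tendsto_0: "\<And>r. r > 0 \<Longrightarrow> (\<lambda>n. rt n r) \<longlonglongrightarrow> 0"
    and rt_V_tendsto_0: "\<And>n. ((\<lambda>r. rt n r * V r) \<longlongrightarrow> 0) at_top"
    and rt_ratio_mono: "\<And>n m. m < n \<Longrightarrow> mono_on {0<..} (\<lambda>r. rt n r / rt m r)"
    and S_rt_tail_tendsto: "\<forall>\<^sub>F R in at_top.
      ((\<lambda>n. \<integral>\<^sup>+r. ennreal (S r * rt n r) * indicator {R..} r \<partial>lborel) \<longlongrightarrow> L R) sequentially"
    and L_tendsto_1: "(L \<longlongrightarrow> 1) at_top"
begin

lemma V_mono: "0 \<le> s \<Longrightarrow> s \<le> t \<Longrightarrow> V s \<le> V t"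
  using V_strict_mono unfolding strict_mono_on_def by (metis atLeast_iff order.trans less_eq_real_def)

lemma V_pos: "t > 0 \<Longrightarrow> V t > 0"
  using V_strict_mono V_nonneg[of 0] unfolding strict_mono_on_def
  by (metis atLeast_iff less_eq_real_def order.strict_trans1)

lemma S_nonneg: "t > 0 \<Longrightarrow> S t \<ge> 0"
  using V_strict_mono by (intro DERIV_nonneg_if_increasing_right[OF V_deriv]) (auto simp: strict_mono_on_def)

lemma D_nonpos: "t > 0 \<Longrightarrow> D n t \<le> 0"
  using DERIV_nonneg_if_increasing_right[OF DERIV_minus[OF rt_deriv[of t n]]] rt_decreasing[of t _ n] by simp

lemma rt_antimono: "0 < r \<Longrightarrow> r \<le> s \<Longrightarrow> rt n s \<le> rt n r"
  using rt_decreasing by (metis less_eq_real_def order_refl)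

lemma rt_continuous: "continuous_on {0<..} (rt n)"
  by (rule continuous_at_imp_continuous_on) (auto intro: DERIV_isCont rt_deriv)

lemma rt_tendsto_0_at_top: "(rt n \<longlongrightarrow> 0) at_top"
proof (rule Lim_null_comparison)
  show "\<forall>\<^sub>F r in at_top. norm (rt n r) \<le> \<bar>rt n r * V r\<bar> / V 1"
    using eventually_ge_at_top[of 1]
  proof eventually_elim
    case (elim r)
    then have "\<bar>rt n r\<bar> * V 1 \<le> \<bar>rt n r * V r\<bar>"
      using V_mono[of 1 r] V_pos[of 1] by (simp add: abs_mult mult_left_mono)
    then show ?case
      using V_pos[of 1] by (simp add: field_simps)
  qed
  show "((\<lambda>r. \<bar>rt n r * V r\<bar> / V 1) \<longlongrightarrow> 0) at_top"
    using tendsto_divide[OF tendsto_rabs[OF rt_V_tendsto_0] tendsto_const[of "V 1"]] V_pos[of 1] by simp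
qed

lemma ennreal_rt_tendsto_0: "r > 0 \<Longrightarrow> (\<lambda>n. ennreal (rt n r)) \<longlonglongrightarrow> 0"
  using tendsto_ennrealI[OF rt_tendsto_0] by simp

lemma rt_pos: "t > 0 \<Longrightarrow> rt n t > 0"
proof -
  assume t: "t > 0"
  have "0 \<le> rt n (t + 1)"
    by (rule tendsto_upperbound[OF rt_tendsto_0_at_top[of n]])
       (use t in \<open>auto intro!: exI[of _ "t + 1"] rt_antimono simp: eventually_at_top_linorder\<close>)
  also have "rt n (t + 1) < rt n t"
    using rt_decreasing t by simp
  finally show ?thesis .
qed

lemma D_tail_measurable[measurable]:
  "R \<ge> 0 \<Longrightarrow> (\<lambda>t. ennreal (- D n t) * indicator {R<..} t) \<in> borel_measurable borel"
  by (rule borel_measurable_continuous_on_ennreal_indicator[OF continuous_on_minus[OF D_cont]]) auto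

lemma rt_eq_nn_integral_deriv:
  assumes s: "s > 0"
  shows "ennreal (rt n s) = (\<integral>\<^sup>+t. ennreal (- D n t) * indicator {s<..} t \<partial>lborel)"
proof -
  let ?f = "\<lambda>t. indicator {0<..} t *\<^sub>R (- D n t)"
  have "(\<integral>\<^sup>+t. ennreal (?f t) * indicator {s..} t \<partial>lborel) = 0 - (- rt n s)"
  proof (rule nn_integral_FTC_atLeast)
    show "?f \<in> borel_measurable borel"
      by (intro borel_measurable_continuous_on_indicator continuous_on_minus D_cont) auto
    show "((\<lambda>t. - rt n t) \<longlongrightarrow> 0) at_top"
      using tendsto_minus[OF rt_tendsto_0_at_top] by simp
  qed (use s D_nonpos in \<open>auto intro!: derivative_eq_intros rt_deriv\<close>)
  also have "(\<integral>\<^sup>+t. ennreal (?f t) * indicator {s..} t \<partial>lborel) = (\<integral>\<^sup>+t. ennreal (- D n t) * indicator {s<..} t \<partial>lborel)"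
    by (intro nn_integral_cong_AE eventually_mono[OF AE_lborel_singleton[of s]])
       (use s in \<open>auto split: split_indicator\<close>)
  finally show ?thesis
    by simp
qed

lemma V_continuous: "continuous_on {0<..} V"
  by (rule continuous_at_imp_continuous_on) (auto intro: DERIV_isCont V_deriv)

definition S_rt_tail :: "nat \<Rightarrow> real \<Rightarrow> ennreal" where
  "S_rt_tail n R = (\<integral>\<^sup>+r. ennreal (S r * rt n r) * indicator {R..} r \<partial>lborel)"

lemma eventually_S_rt_tail_tendsto: "\<forall>\<^sub>F R in at_top. (\<lambda>n. S_rt_tail n R) \<longlonglongrightarrow> L R"
  using S_rt_tail_tendsto unfolding S_rt_tail_def .

definition V_D_tail :: "nat \<Rightarrow> real \<Rightarrow> ennreal" where
  "V_D_tail n R = (\<integral>\<^sup>+t. ennreal (- D n t) * indicator {R<..} t * ennreal (V t) \<partial>lborel)"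

lemma D_V_measurable:
  assumes "R \<ge> 0"
  shows "(\<lambda>t. ennreal (- D n t * (V t - c)) * indicator {R<..} t) \<in> borel_measurable borel"
  using assms
  by (intro borel_measurable_continuous_on_ennreal_indicator[where U="{0<..}"] continuous_intros
      continuous_on_minus D_cont V_continuous) auto

lemma D_V_tail_measurable[measurable]:
  assumes "R \<ge> 0"
  shows "(\<lambda>t. ennreal (- D n t) * indicator {R<..} t * ennreal (V t)) \<in> borel_measurable borel"
proof -
  have "(\<lambda>t. ennreal (- D n t * (V t - 0)) * indicator {R<..} t) \<in> borel_measurable borel"
    using D_V_measurable[OF assms] .
  also have "(\<lambda>t. ennreal (- D n t * (V t - 0)) * indicator {R<..} t)
      = (\<lambda>t. ennreal (- D n t) * indicator {R<..} t * ennreal (V t))"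
  proof
    fix t
    show "ennreal (- D n t * (V t - 0)) * indicator {R<..} t = ennreal (- D n t) * indicator {R<..} t * ennreal (V t)"
      using assms D_nonpos[of t n] V_nonneg[of t]
      by (cases "R < t") (auto simp: ennreal_mult[symmetric] mult.commute)
  qed
  finally show ?thesis .
qed

lemma V_increment_eq_nn_integral:
  assumes "0 < R" "R \<le> t"
  shows "ennreal (V t - V R) = (\<integral>\<^sup>+s. ennreal (S s) * indicator {R..} s * indicator {..<t} s \<partial>lborel)"
proof -
  let ?f = "\<lambda>s. indicator {0<..} s *\<^sub>R S s"
  have "?f \<in> borel_measurable borel"
    by (rule borel_measurable_continuous_on_indicator) (use S_cont in auto)
  then have "(\<integral>\<^sup>+s. ennreal (?f s) * indicator {R..t} s \<partial>lborel) = ennreal (V t - V R)"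
    by (rule nn_integral_FTC_Icc) (use assms in \<open>auto intro!: V_deriv S_nonneg\<close>)
  moreover have "(\<integral>\<^sup>+s. ennreal (?f s) * indicator {R..t} s \<partial>lborel)
      = (\<integral>\<^sup>+s. ennreal (S s) * indicator {R..} s * indicator {..<t} s \<partial>lborel)"
    by (intro nn_integral_cong_AE eventually_mono[OF AE_lborel_singleton[of t]])
       (use assms in \<open>auto split: split_indicator\<close>)
  ultimately show ?thesis
    by simp
qed

lemma V_D_tail_split:
  assumes R: "R > 0"
  shows "V_D_tail n R = ennreal (V R * rt n R)
    + (\<integral>\<^sup>+t. ennreal (- D n t * (V t - V R)) * indicator {R<..} t \<partial>lborel)"
proof -
  let ?q = "\<lambda>t. ennreal (- D n t) * indicator {R<..} t"
  have "V_D_tail n R = (\<integral>\<^sup>+t. ?q t * ennreal (V R) + ennreal (- D n t * (V t - V R)) * indicator {R<..} t \<partial>lborel)"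
    unfolding V_D_tail_def
  proof (intro nn_integral_cong)
    fix t
    have "R < t \<Longrightarrow> ennreal (- D n t * V t) = ennreal (- D n t * V R) + ennreal (- D n t * (V t - V R))"
      using R D_nonpos[of t n] V_nonneg[of R] V_mono[of R t]
      by (subst ennreal_plus[symmetric]) (auto simp: algebra_simps intro: mult_nonneg_nonpos mult_right_mono_neg)
    then show "?q t * ennreal (V t) = ?q t * ennreal (V R) + ennreal (- D n t * (V t - V R)) * indicator {R<..} t"
      using R D_nonpos[of t n] V_nonneg[of R] V_nonneg[of t]
      by (auto simp: ennreal_mult'[symmetric] mult.commute split: split_indicator)
  qed
  also have "\<dots> = (\<integral>\<^sup>+t. ?q t \<partial>lborel) * ennreal (V R)
      + (\<integral>\<^sup>+t. ennreal (- D n t * (V t - V R)) * indicator {R<..} t \<partial>lborel)"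
    using D_V_measurable[where R=R and n=n and c="V R"] R by (simp add: nn_integral_add nn_integral_multc)
  finally show ?thesis
    using rt_eq_nn_integral_deriv[OF R, of n] rt_pos[OF R, of n] V_nonneg[of R] R
    by (simp add: ennreal_mult mult.commute)
qed

lemma V_D_tail_eq:
  assumes R: "R > 0"
  shows "V_D_tail n R = ennreal (V R * rt n R) + S_rt_tail n R"
proof -
  let ?q = "\<lambda>t. ennreal (- D n t) * indicator {R<..} t"
  let ?g = "\<lambda>s. ennreal (S s) * indicator {R..} s"
  have [measurable]: "?q \<in> borel_measurable borel" "?g \<in> borel_measurable borel"
    using R by (auto intro: borel_measurable_continuous_on_ennreal_indicator[OF S_cont])
  have "(\<integral>\<^sup>+t. ennreal (- D n t * (V t - V R)) * indicator {R<..} t \<partial>lborel)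
      = (\<integral>\<^sup>+t. ?q t * (\<integral>\<^sup>+s. ?g s * indicator {..<t} s \<partial>lborel) \<partial>lborel)"
  proof (intro nn_integral_cong)
    fix t
    show "ennreal (- D n t * (V t - V R)) * indicator {R<..} t = ?q t * (\<integral>\<^sup>+s. ?g s * indicator {..<t} s \<partial>lborel)"
      using R D_nonpos[of t n] V_mono[of R t]
      by (cases "R < t") (auto simp: V_increment_eq_nn_integral[symmetric] ennreal_mult[symmetric])
  qed
  also have "\<dots> = (\<integral>\<^sup>+s. ?g s * (\<integral>\<^sup>+t. ?q t * indicator {s<..} t \<partial>lborel) \<partial>lborel)"
    by (rule nn_integral_swap_less) measurable
  also have "\<dots> = S_rt_tail n R"
    unfolding S_rt_tail_def
  proof (intro nn_integral_cong)
    fix s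
    have "s \<ge> R \<Longrightarrow> (\<integral>\<^sup>+t. ?q t * indicator {s<..} t \<partial>lborel) = ennreal (rt n s)"
      using R by (subst rt_eq_nn_integral_deriv) (auto intro!: nn_integral_cong split: split_indicator)
    then show "?g s * (\<integral>\<^sup>+t. ?q t * indicator {s<..} t \<partial>lborel) = ennreal (S s * rt n s) * indicator {R..} s"
      using R S_nonneg[of s] rt_pos[of s n] by (auto simp: ennreal_mult split: split_indicator)
  qed
  finally show ?thesis
    using V_D_tail_split[OF R, of n] by simp
qed

lemma V_D_tail_tendsto:
  assumes "R > 0" "(\<lambda>n. S_rt_tail n R) \<longlonglongrightarrow> L R"
  shows "(\<lambda>n. V_D_tail n R) \<longlonglongrightarrow> L R"
proof -
  have "(\<lambda>n. ennreal (V R * rt n R)) \<longlonglongrightarrow> ennreal (V R * 0)"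
    using assms(1) by (intro tendsto_ennrealI tendsto_mult tendsto_const rt_tendsto_0)
  from tendsto_add[OF this assms(2)] show ?thesis
    by (simp add: V_D_tail_eq[OF assms(1)])
qed

end

section \<open>Volume growth and the tail mass of the kernel\<close>

locale radial_volume = radial_profile V S rt D L
  for V S :: "real \<Rightarrow> real" and rt D :: "nat \<Rightarrow> real \<Rightarrow> real" and L :: "real \<Rightarrow> ennreal" +
  fixes M :: "'a::{second_countable_topology,metric_space} measure" and A :: ennreal and k R0 :: real
  assumes sets_M: "sets M = sets borel"
    and AVR_tendsto: "\<And>x. ((\<lambda>r. emeasure M (ball x r) / ennreal (V r)) \<longlongrightarrow> A) at_top"
    and k_pos: "k > 0" and R0_pos: "R0 > 0"
    and volume_growth: "\<And>r x. r \<ge> R0 \<Longrightarrow> emeasure M (ball x r) \<le> ennreal (k * V r)"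
begin

lemma space_M: "space M = UNIV"
  using sets_eq_imp_space_eq[OF sets_M] by simp

lemma borel_sets_M[measurable]: "ball x r \<in> sets M" "cball x r \<in> sets M"
  by (auto simp: sets_M)

lemma compl_sets_M[measurable]: "B \<in> sets M \<Longrightarrow> - B \<in> sets M"
  using sets.compl_sets[of B M] by (simp add: space_M Compl_eq_Diff_UNIV)

lemma emeasure_ball_finite: "emeasure M (ball x r) < \<infinity>"
proof -
  have "emeasure M (ball x r) \<le> emeasure M (ball x (max r R0))"
    by (rule emeasure_mono) auto
  also have "\<dots> \<le> ennreal (k * V (max r R0))"
    by (rule volume_growth) simp
  finally show ?thesis
    by (simp add: order_le_less_trans)
qed

lemma emeasure_cball_finite: "emeasure M (cball x r) < \<infinity>"
  by (rule le_less_trans[OF emeasure_mono emeasure_ball_finite[of x "r + 1"]]) auto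

sublocale sigma_finite_measure M
proof
  obtain x0 :: 'a where True by simp
  show "\<exists>A. countable A \<and> A \<subseteq> sets M \<and> \<Union> A = space M \<and> (\<forall>a\<in>A. emeasure M a \<noteq> \<infinity>)"
    using emeasure_ball_finite
    by (intro exI[of _ "range (\<lambda>n::nat. ball x0 (real n))"])
       (auto simp: space_M dist_commute less_top intro: reals_Archimedean2)
qed

lemma AVR_le_k: "A \<le> ennreal k"
proof -
  obtain x0 :: 'a where True by simp
  show ?thesis
  proof (rule tendsto_upperbound[OF AVR_tendsto[of x0]])
    show "\<forall>\<^sub>F r in at_top. emeasure M (ball x0 r) / ennreal (V r) \<le> ennreal k"
      using eventually_ge_at_top[of R0]
    proof eventually_elim
      case (elim r)
      then have "emeasure M (ball x0 r) \<le> ennreal k * ennreal (V r)"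
        using volume_growth[of r x0] k_pos V_nonneg[of r] R0_pos by (simp add: ennreal_mult)
      then show ?case
        using V_pos[of r] R0_pos elim by (intro divide_le_posI_ennreal) (auto simp: mult.commute)
    qed
  qed simp
qed

lemma AVR_finite: "A < \<infinity>"
  using AVR_le_k by (simp add: order_le_less_trans)

lemma eventually_emeasure_ball_le:
  assumes "A < b"
  shows "eventually (\<lambda>R. \<forall>t>R. emeasure M (ball x t) \<le> b * ennreal (V t)) at_top"
proof -
  obtain T where T: "\<And>t. t \<ge> T \<Longrightarrow> emeasure M (ball x t) / ennreal (V t) < b"
    using order_tendstoD(2)[OF AVR_tendsto assms] by (auto simp: eventually_at_top_linorder)
  show ?thesis
  proof (rule eventually_mono[OF eventually_ge_at_top[of "max T 0"]], intro allI impI)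
    fix R t assume "max T 0 \<le> R" "R < t"
    then show "emeasure M (ball x t) \<le> b * ennreal (V t)"
      using T[of t] V_pos[of t] by (simp add: divide_less_ennreal less_imp_le)
  qed
qed

lemma eventually_emeasure_ball_ge:
  assumes "a < A"
  shows "eventually (\<lambda>R. \<forall>t>R. a * ennreal (V t) \<le> emeasure M (ball x t)) at_top"
proof -
  obtain T where T: "\<And>t. t \<ge> T \<Longrightarrow> a < emeasure M (ball x t) / ennreal (V t)"
    using order_tendstoD(1)[OF AVR_tendsto assms] by (auto simp: eventually_at_top_linorder)
  show ?thesis
  proof (rule eventually_mono[OF eventually_ge_at_top[of "max T 0"]], intro allI impI)
    fix R t assume "max T 0 \<le> R" "R < t"
    then have "a * ennreal (V t) \<le> emeasure M (ball x t) / ennreal (V t) * ennreal (V t)"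
      using T[of t] by (intro mult_right_mono) auto
    also have "\<dots> = emeasure M (ball x t)"
      using V_pos[of t] \<open>R < t\<close> \<open>max T 0 \<le> R\<close> by (simp add: ennreal_divide_times)
    finally show "a * ennreal (V t) \<le> emeasure M (ball x t)" .
  qed
qed

lemma pair_fst_measurable[measurable]: "fst \<in> borel_measurable (M \<Otimes>\<^sub>M N)"
  using measurable_fst[of M N] by (simp add: measurable_cong_sets[OF refl sets_M])

lemma pair_snd_measurable[measurable]: "snd \<in> borel_measurable (N \<Otimes>\<^sub>M M)"
  using measurable_snd[of N M] by (simp add: measurable_cong_sets[OF refl sets_M])

definition far_kernel :: "nat \<Rightarrow> real \<Rightarrow> 'a \<times> 'a \<Rightarrow> ennreal" where
  "far_kernel n R z = ennreal (rt n (dist (fst z) (snd z))) * indicator {R<..} (dist (fst z) (snd z))"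

definition kernel_tail :: "nat \<Rightarrow> real \<Rightarrow> 'a \<Rightarrow> ennreal" where
  "kernel_tail n R x = (\<integral>\<^sup>+y. far_kernel n R (x, y) \<partial>M)"

lemma rt_indicator_measurable[measurable]:
  "R \<ge> 0 \<Longrightarrow> (\<lambda>r. ennreal (rt n r) * indicator {R<..} r) \<in> borel_measurable borel"
  by (rule borel_measurable_continuous_on_ennreal_indicator[OF rt_continuous]) auto

lemma dist_pair_measurable[measurable]: "(\<lambda>z. dist (fst z) (snd z)) \<in> borel_measurable (M \<Otimes>\<^sub>M M)"
  by measurable

lemma far_kernel_measurable[measurable]: "R \<ge> 0 \<Longrightarrow> far_kernel n R \<in> borel_measurable (M \<Otimes>\<^sub>M M)"
  unfolding far_kernel_def using measurable_compose[OF dist_pair_measurable rt_indicator_measurable]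
  by simp

lemma far_kernel_section_measurable[measurable]:
  "R \<ge> 0 \<Longrightarrow> (\<lambda>y. far_kernel n R (x, y)) \<in> borel_measurable M"
  using measurable_Pair2[OF far_kernel_measurable] by (simp add: space_M)

lemma kernel_tail_measurable[measurable]: "R \<ge> 0 \<Longrightarrow> kernel_tail n R \<in> borel_measurable M"
  unfolding kernel_tail_def using far_kernel_measurable
  by (intro borel_measurable_nn_integral) (simp add: case_prod_unfold)

lemma far_kernel_sym: "far_kernel n R (x, y) = far_kernel n R (y, x)"
  by (simp add: far_kernel_def dist_commute)

lemma far_kernel_le: "R > 0 \<Longrightarrow> far_kernel n R z \<le> ennreal (rt n R)"
  unfolding far_kernel_def using rt_antimono[of R "dist (fst z) (snd z)" n]
  by (auto split: split_indicator intro: ennreal_leI)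

lemma annulus_measure_measurable:
  "(\<lambda>t. emeasure M (ball x t - cball x R)) \<in> borel_measurable borel"
proof -
  have "(\<lambda>(t, y). indicator {z. R < dist x (snd z) \<and> dist x (snd z) < fst z} (t, y) :: ennreal)
      \<in> borel_measurable (borel \<Otimes>\<^sub>M M)"
    by (simp add: case_prod_unfold) measurable
  moreover have "emeasure M (ball x t - cball x R)
      = (\<integral>\<^sup>+y. indicator {z. R < dist x (snd z) \<and> dist x (snd z) < fst z} (t, y) \<partial>M)" for t
    by (rule trans[OF nn_integral_indicator[symmetric]]) (auto intro!: nn_integral_cong simp: indicator_def)
  ultimately show ?thesis
    using borel_measurable_nn_integral by simp
qed

lemma kernel_tail_eq_nn_integral:
  assumes R: "R \<ge> 0"
  shows "kernel_tail n R x
    = (\<integral>\<^sup>+t. ennreal (- D n t) * indicator {R<..} t * emeasure M (ball x t - cball x R) \<partial>lborel)"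
proof -
  interpret pair_sigma_finite M lborel ..
  let ?F = "\<lambda>y t. ennreal (- D n t) * indicator {R<..} t
      * indicator {z. R < dist x (fst z) \<and> dist x (fst z) < snd z} (y, t)"
  have [measurable]: "(\<lambda>t. ennreal (- D n t) * indicator {R<..} t) \<in> borel_measurable lborel"
    using R by simp
  have "far_kernel n R (x, y) = (\<integral>\<^sup>+t. ?F y t \<partial>lborel)" for y
  proof (cases "R < dist x y")
    case True
    then have "dist x y > 0"
      using R by linarith
    with True have "far_kernel n R (x, y) = (\<integral>\<^sup>+t. ennreal (- D n t) * indicator {dist x y<..} t \<partial>lborel)"
      by (simp add: far_kernel_def rt_eq_nn_integral_deriv)
    also have "\<dots> = (\<integral>\<^sup>+t. ?F y t \<partial>lborel)"
      using True by (intro nn_integral_cong) (auto split: split_indicator)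
    finally show ?thesis .
  qed (simp add: far_kernel_def)
  then have "kernel_tail n R x = (\<integral>\<^sup>+y. \<integral>\<^sup>+t. ?F y t \<partial>lborel \<partial>M)"
    by (simp add: kernel_tail_def)
  also have "\<dots> = (\<integral>\<^sup>+t. \<integral>\<^sup>+y. ?F y t \<partial>M \<partial>lborel)"
    by (rule Fubini'[symmetric]) (simp add: case_prod_unfold, measurable)
  also have "\<dots> = (\<integral>\<^sup>+t. ennreal (- D n t) * indicator {R<..} t * emeasure M (ball x t - cball x R) \<partial>lborel)"
  proof (intro nn_integral_cong)
    fix t
    have "(\<integral>\<^sup>+y. ?F y t \<partial>M)
        = (\<integral>\<^sup>+y. (ennreal (- D n t) * indicator {R<..} t) * indicator (ball x t - cball x R) y \<partial>M)"
      by (intro nn_integral_cong) (auto split: split_indicator)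
    then show "(\<integral>\<^sup>+y. ?F y t \<partial>M) = ennreal (- D n t) * indicator {R<..} t * emeasure M (ball x t - cball x R)"
      by (simp add: nn_integral_cmult_indicator)
  qed
  finally show ?thesis .
qed

lemma kernel_tail_le_V_D_tail:
  assumes R: "R \<ge> 0" and b: "\<And>t. t > R \<Longrightarrow> emeasure M (ball x t) \<le> b * ennreal (V t)"
  shows "kernel_tail n R x \<le> b * V_D_tail n R"
proof -
  have "kernel_tail n R x \<le> (\<integral>\<^sup>+t. b * (ennreal (- D n t) * indicator {R<..} t * ennreal (V t)) \<partial>lborel)"
    unfolding kernel_tail_eq_nn_integral[OF R]
  proof (intro nn_integral_mono)
    fix t
    have "R < t \<Longrightarrow> emeasure M (ball x t - cball x R) \<le> b * ennreal (V t)"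
      using b[of t] emeasure_mono[of "ball x t - cball x R" "ball x t" M] by auto
    then have "R < t \<Longrightarrow> ennreal (- D n t) * emeasure M (ball x t - cball x R)
        \<le> ennreal (- D n t) * (b * ennreal (V t))"
      by (intro mult_left_mono) auto
    then show "ennreal (- D n t) * indicator {R<..} t * emeasure M (ball x t - cball x R)
        \<le> b * (ennreal (- D n t) * indicator {R<..} t * ennreal (V t))"
      by (cases "R < t") (auto simp: ac_simps)
  qed
  also have "\<dots> = b * V_D_tail n R"
    unfolding V_D_tail_def using R by (intro nn_integral_cmult) simp
  finally show ?thesis .
qed

lemma V_D_tail_le_kernel_tail:
  assumes R: "R > 0" and a: "\<And>t. t > R \<Longrightarrow> a * ennreal (V t) \<le> emeasure M (ball x t)"
  shows "a * V_D_tail n R \<le> kernel_tail n R x + emeasure M (cball x R) * ennreal (rt n R)"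
proof -
  let ?q = "\<lambda>t. ennreal (- D n t) * indicator {R<..} t"
  have [measurable]: "?q \<in> borel_measurable borel"
    using R by simp
  have "a * V_D_tail n R = (\<integral>\<^sup>+t. a * (?q t * ennreal (V t)) \<partial>lborel)"
    unfolding V_D_tail_def using R by (intro nn_integral_cmult[symmetric]) simp
  also have "\<dots> \<le> (\<integral>\<^sup>+t. ?q t * emeasure M (ball x t - cball x R) + emeasure M (cball x R) * ?q t \<partial>lborel)"
  proof (intro nn_integral_mono)
    fix t
    have "R < t \<Longrightarrow> a * ennreal (V t) \<le> emeasure M (ball x t - cball x R) + emeasure M (cball x R)"
      using a[of t] emeasure_subadditive[of "ball x t - cball x R" M "cball x R"]
        emeasure_mono[of "ball x t" "(ball x t - cball x R) \<union> cball x R" M]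
      by auto
    then have "R < t \<Longrightarrow> ennreal (- D n t) * (a * ennreal (V t))
        \<le> ennreal (- D n t) * (emeasure M (ball x t - cball x R) + emeasure M (cball x R))"
      by (intro mult_left_mono) auto
    then show "a * (?q t * ennreal (V t)) \<le> ?q t * emeasure M (ball x t - cball x R) + emeasure M (cball x R) * ?q t"
      by (cases "R < t") (auto simp: ac_simps distrib_left)
  qed
  also have "\<dots> = kernel_tail n R x + emeasure M (cball x R) * ennreal (rt n R)"
    using R annulus_measure_measurable[of x R]
    by (simp add: nn_integral_add nn_integral_cmult kernel_tail_eq_nn_integral rt_eq_nn_integral_deriv)
  finally show ?thesis .
qed

lemma kernel_tail_antimono:
  assumes "0 \<le> R" "R \<le> R'"
  shows "kernel_tail n R' x \<le> kernel_tail n R x"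
  unfolding kernel_tail_def far_kernel_def
  by (rule nn_integral_mono) (use assms in \<open>auto split: split_indicator\<close>)

lemma kernel_tail_le_shift:
  assumes "0 < R" "R \<le> R'"
  shows "kernel_tail n R x \<le> kernel_tail n R' x + ennreal (rt n R) * emeasure M (cball x R')"
proof -
  have "kernel_tail n R x \<le> (\<integral>\<^sup>+y. far_kernel n R' (x, y) + ennreal (rt n R) * indicator (cball x R') y \<partial>M)"
    unfolding kernel_tail_def
  proof (intro nn_integral_mono)
    fix y
    show "far_kernel n R (x, y) \<le> far_kernel n R' (x, y) + ennreal (rt n R) * indicator (cball x R') y"
      using assms rt_antimono[of R "dist x y" n]
      by (cases "R < dist x y"; cases "R' < dist x y") (auto simp: far_kernel_def intro: ennreal_leI)
  qed
  also have "\<dots> = kernel_tail n R' x + ennreal (rt n R) * emeasure M (cball x R')"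
    using assms by (simp add: nn_integral_add kernel_tail_def nn_integral_cmult_indicator del: nn_integral_indicator_singleton)
  finally show ?thesis .
qed

lemma rt_cball_tendsto_0: "r > 0 \<Longrightarrow> (\<lambda>n. ennreal (rt n r) * emeasure M (cball x R)) \<longlonglongrightarrow> 0"
  using tendsto_mult_ennreal[OF ennreal_rt_tendsto_0 tendsto_const] emeasure_cball_finite[of x R]
  by (simp add: less_top)

lemma Limsup_kernel_tail_le:
  assumes R: "0 < R" "R \<le> R'" and b: "0 < b" "b < \<infinity>"
    and growth: "\<forall>t>R'. emeasure M (ball x t) \<le> b * ennreal (V t)"
    and tail: "(\<lambda>n. S_rt_tail n R') \<longlonglongrightarrow> L R'"
  shows "Limsup sequentially (\<lambda>n. kernel_tail n R x) \<le> b * L R'"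
proof (rule Limsup_le_limit)
  show "\<forall>\<^sub>F n in sequentially. kernel_tail n R x \<le> b * V_D_tail n R' + ennreal (rt n R) * emeasure M (cball x R')"
  proof (intro always_eventually allI)
    fix n
    have "kernel_tail n R' x \<le> b * V_D_tail n R'"
      using R growth by (intro kernel_tail_le_V_D_tail) auto
    then show "kernel_tail n R x \<le> b * V_D_tail n R' + ennreal (rt n R) * emeasure M (cball x R')"
      using kernel_tail_le_shift[OF R, of n x] by (meson add_right_mono order_trans)
  qed
  have "(\<lambda>n. b * V_D_tail n R') \<longlonglongrightarrow> b * L R'"
    using R b by (intro tendsto_mult_ennreal[OF tendsto_const V_D_tail_tendsto[OF _ tail]]) auto
  from tendsto_add[OF this rt_cball_tendsto_0[OF R(1)]]
  show "(\<lambda>n. b * V_D_tail n R' + ennreal (rt n R) * emeasure M (cball x R')) \<longlonglongrightarrow> b * L R'"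
    by simp
qed simp

lemma Liminf_kernel_tail_ge:
  assumes R: "0 < R" "R \<le> R'" and a: "0 < a" "a < \<infinity>"
    and growth: "\<forall>t>R'. a * ennreal (V t) \<le> emeasure M (ball x t)"
    and tail: "(\<lambda>n. S_rt_tail n R') \<longlonglongrightarrow> L R'"
  shows "a * L R' \<le> Liminf sequentially (\<lambda>n. kernel_tail n R x)"
proof -
  have "a * L R' \<le> Liminf sequentially (\<lambda>n. kernel_tail n R x) + 0"
  proof (rule limit_le_Liminf_add_ennreal)
    show "\<forall>\<^sub>F n in sequentially.
        a * V_D_tail n R' \<le> kernel_tail n R x + ennreal (rt n R') * emeasure M (cball x R')"
    proof (intro always_eventually allI)
      fix n
      have "a * V_D_tail n R' \<le> kernel_tail n R' x + emeasure M (cball x R') * ennreal (rt n R')"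
        using R growth by (intro V_D_tail_le_kernel_tail) auto
      also have "\<dots> \<le> kernel_tail n R x + emeasure M (cball x R') * ennreal (rt n R')"
        using R by (intro add_right_mono kernel_tail_antimono) auto
      finally show "a * V_D_tail n R' \<le> kernel_tail n R x + ennreal (rt n R') * emeasure M (cball x R')"
        by (simp add: mult.commute)
    qed
    show "(\<lambda>n. a * V_D_tail n R') \<longlonglongrightarrow> a * L R'"
      using R a by (intro tendsto_mult_ennreal[OF tendsto_const V_D_tail_tendsto[OF _ tail]]) auto
    show "(\<lambda>n. ennreal (rt n R') * emeasure M (cball x R')) \<longlonglongrightarrow> 0"
      using R by (intro rt_cball_tendsto_0) auto
  qed simp
  then show ?thesis
    by simp
qed

lemma kernel_tail_tendsto:
  assumes R: "R > 0"
  shows "(\<lambda>n. kernel_tail n R x) \<longlonglongrightarrow> A"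
proof (rule tendsto_of_Limsup_le_Liminf)
  show "Limsup sequentially (\<lambda>n. kernel_tail n R x) \<le> A"
  proof (rule dense_ge)
    fix b assume "A < b"
    show "Limsup sequentially (\<lambda>n. kernel_tail n R x) \<le> b"
    proof (cases "b = \<infinity>")
      case False
      have "\<forall>\<^sub>F R' in at_top. Limsup sequentially (\<lambda>n. kernel_tail n R x) \<le> b * L R'"
        using eventually_ge_at_top[of R] eventually_emeasure_ball_le[OF \<open>A < b\<close>, of x]
          eventually_S_rt_tail_tendsto
      proof eventually_elim
        case (elim R')
        then show ?case
          using R \<open>A < b\<close> False by (intro Limsup_kernel_tail_le) (auto simp: less_top dest: le_less_trans)
      qed
      then show ?thesis
        using tendsto_lowerbound[OF tendsto_mult_ennreal[OF tendsto_const L_tendsto_1]] False by simp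
    qed simp
  qed
  show "A \<le> Liminf sequentially (\<lambda>n. kernel_tail n R x)"
  proof (rule dense_le)
    fix a assume "a < A"
    show "a \<le> Liminf sequentially (\<lambda>n. kernel_tail n R x)"
    proof (cases "a = 0")
      case False
      have "a < \<infinity>"
        using \<open>a < A\<close> AVR_finite by simp
      have "\<forall>\<^sub>F R' in at_top. a * L R' \<le> Liminf sequentially (\<lambda>n. kernel_tail n R x)"
        using eventually_ge_at_top[of R] eventually_emeasure_ball_ge[OF \<open>a < A\<close>, of x]
          eventually_S_rt_tail_tendsto
      proof eventually_elim
        case (elim R')
        then show ?case
          using R \<open>a < \<infinity>\<close> False by (intro Liminf_kernel_tail_ge) (auto simp: zero_less_iff_neq_zero)
      qed
      then show ?thesis
        using tendsto_upperbound[OF tendsto_mult_ennreal[OF tendsto_const L_tendsto_1]] \<open>a < \<infinity>\<close> by simp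
    qed simp
  qed
qed simp

lemma kernel_tail_eventually_bounded:
  assumes "R \<ge> R0" "(\<lambda>n. S_rt_tail n R) \<longlonglongrightarrow> L R" "L R < c"
  shows "eventually (\<lambda>n. \<forall>x. kernel_tail n R x \<le> ennreal k * c) sequentially"
proof -
  have R: "R > 0"
    using assms(1) R0_pos by simp
  have growth: "emeasure M (ball x t) \<le> ennreal k * ennreal (V t)" if "t > R" for x t
    using volume_growth[of t x] that assms(1) k_pos V_nonneg[of t] R by (simp add: ennreal_mult)
  show ?thesis
    using order_tendstoD(2)[OF V_D_tail_tendsto[OF R assms(2)] assms(3)]
  proof eventually_elim
    case (elim n)
    show ?case
    proof
      fix x
      have "kernel_tail n R x \<le> ennreal k * V_D_tail n R"
        using R growth by (intro kernel_tail_le_V_D_tail) auto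
      also have "\<dots> \<le> ennreal k * c"
        using elim by (intro mult_left_mono) auto
      finally show "kernel_tail n R x \<le> ennreal k * c" .
    qed
  qed
qed

end

section \<open>The nonlocal energy\<close>

locale radial_energy = radial_volume V S rt D L M A k R0
  for V S :: "real \<Rightarrow> real" and rt D :: "nat \<Rightarrow> real \<Rightarrow> real" and L :: "real \<Rightarrow> ennreal"
    and M :: "'a::{second_countable_topology,metric_space} measure" and A :: ennreal and k R0 :: real +
  fixes \<rho> :: "nat \<Rightarrow> 'a \<Rightarrow> 'a \<Rightarrow> real" and u :: "'a \<Rightarrow> real" and p :: real
  assumes \<rho>_radial: "\<And>n x y. x \<noteq> y \<Longrightarrow> \<rho> n x y = rt n (dist x y)"
    and p_ge_1: "p \<ge> 1"
    and u_Lp: "in_Lp M p u"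
begin

definition upow :: "'a \<Rightarrow> ennreal" where
  "upow x = ennreal (\<bar>u x\<bar> powr p)"

definition dpow :: "'a \<times> 'a \<Rightarrow> ennreal" where
  "dpow z = ennreal (\<bar>u (fst z) - u (snd z)\<bar> powr p)"

definition near_energy :: "nat \<Rightarrow> real \<Rightarrow> ennreal" where
  "near_energy n R = (\<integral>\<^sup>+z. dpow z * far_kernel n 0 z * indicator {..R} (dist (fst z) (snd z)) \<partial>(M \<Otimes>\<^sub>M M))"

definition far_energy :: "nat \<Rightarrow> real \<Rightarrow> ennreal" where
  "far_energy n R = (\<integral>\<^sup>+z. dpow z * far_kernel n R z \<partial>(M \<Otimes>\<^sub>M M))"

lemma u_measurable[measurable]: "u \<in> borel_measurable M"
  using u_Lp by (simp add: in_Lp_def)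

lemma upow_measurable[measurable]: "upow \<in> borel_measurable M"
  unfolding upow_def by measurable

lemma dpow_measurable[measurable]: "dpow \<in> borel_measurable (M \<Otimes>\<^sub>M M)"
  unfolding dpow_def by measurable

lemma Lp_norm_pow_eq: "Lp_norm_pow M p u = integral\<^sup>N M upow"
  unfolding Lp_norm_pow_def upow_def ..

lemma Lp_norm_pow_finite: "integral\<^sup>N M upow < \<infinity>"
  using u_Lp unfolding in_Lp_def upow_def by simp

lemma energy_split:
  assumes R: "R > 0"
  shows "energy M p (\<rho> n) u = near_energy n R + far_energy n R"
proof -
  have "energy M p (\<rho> n) u
      = (\<integral>\<^sup>+z. dpow z * far_kernel n 0 z * indicator {..R} (dist (fst z) (snd z)) + dpow z * far_kernel n R z \<partial>(M \<Otimes>\<^sub>M M))"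
    unfolding energy_def
  proof (intro nn_integral_cong)
    fix z :: "'a \<times> 'a"
    obtain x y where z: "z = (x, y)"
      by (cases z)
    show "ennreal (\<bar>u (fst z) - u (snd z)\<bar> powr p * \<rho> n (fst z) (snd z)) * indicator {z. fst z \<noteq> snd z} z
      = dpow z * far_kernel n 0 z * indicator {..R} (dist (fst z) (snd z)) + dpow z * far_kernel n R z"
    proof (cases "x = y")
      case False
      then have "ennreal (\<bar>u x - u y\<bar> powr p * \<rho> n x y) = dpow z * ennreal (rt n (dist x y))"
        using \<rho>_radial[OF False] rt_pos[of "dist x y" n] by (simp add: z dpow_def ennreal_mult)
      then show ?thesis
        using False by (cases "dist x y \<le> R") (auto simp: z far_kernel_def)
    qed (use R in \<open>simp add: z far_kernel_def\<close>)
  qed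
  also have "\<dots> = near_energy n R + far_energy n R"
    unfolding near_energy_def far_energy_def using R by (intro nn_integral_add) measurable
  finally show ?thesis .
qed

lemma near_energy_le:
  assumes R: "R > 0" and mn: "m < n"
  shows "near_energy n R \<le> ennreal (rt n R / rt m R) * near_energy m R"
proof -
  have "near_energy n R \<le> (\<integral>\<^sup>+z. ennreal (rt n R / rt m R)
      * (dpow z * far_kernel m 0 z * indicator {..R} (dist (fst z) (snd z))) \<partial>(M \<Otimes>\<^sub>M M))"
    unfolding near_energy_def
  proof (intro nn_integral_mono)
    fix z :: "'a \<times> 'a"
    let ?r = "dist (fst z) (snd z)"
    have "rt n ?r \<le> rt n R / rt m R * rt m ?r" if r: "0 < ?r" "?r \<le> R"
    proof -
      have "rt n ?r / rt m ?r \<le> rt n R / rt m R"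
        using rt_ratio_mono[OF mn] r R unfolding mono_on_def by auto
      then show ?thesis
        using rt_pos[OF r(1), of m] by (simp add: divide_le_eq)
    qed
    then show "dpow z * far_kernel n 0 z * indicator {..R} ?r
        \<le> ennreal (rt n R / rt m R) * (dpow z * far_kernel m 0 z * indicator {..R} ?r)"
      using rt_pos[OF R, of m] rt_pos[OF R, of n] rt_pos[of ?r m]
      by (auto simp: far_kernel_def ennreal_mult[symmetric] mult_ac intro!: mult_left_mono ennreal_leI
          split: split_indicator)
  qed
  also have "\<dots> = ennreal (rt n R / rt m R) * near_energy m R"
    unfolding near_energy_def by (intro nn_integral_cmult) measurable
  finally show ?thesis .
qed

lemma near_energy_tendsto_0:
  assumes R: "R > 0" and fin: "near_energy m R < \<infinity>"
  shows "(\<lambda>n. near_energy n R) \<longlonglongrightarrow> 0"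
proof (rule tendsto_sandwich[where f="\<lambda>_. 0"])
  show "\<forall>\<^sub>F n in sequentially. near_energy n R \<le> ennreal (rt n R / rt m R) * near_energy m R"
    using eventually_gt_at_top[of m] by eventually_elim (rule near_energy_le[OF R])
  show "(\<lambda>n. ennreal (rt n R / rt m R) * near_energy m R) \<longlonglongrightarrow> 0"
    using tendsto_mult_ennreal[OF tendsto_ennrealI[OF tendsto_divide[OF rt_tendsto_0[OF R] tendsto_const]]
        tendsto_const, of "rt m R" "near_energy m R"] rt_pos[OF R, of m] fin
    by simp
qed auto

definition convex_weight :: "real \<Rightarrow> ennreal" where
  "convex_weight d = ennreal ((1 + d) powr (p - 1))"

definition upow_on :: "'a set \<Rightarrow> 'a \<Rightarrow> ennreal" where
  "upow_on B x = upow x * indicator B x"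

definition diag_block :: "'a set \<Rightarrow> 'a \<times> 'a \<Rightarrow> ennreal" where
  "diag_block B z = indicator B (fst z) * indicator B (snd z) * (upow (fst z) + upow (snd z))"

definition tail_integral :: "nat \<Rightarrow> real \<Rightarrow> ('a \<Rightarrow> ennreal) \<Rightarrow> ennreal" where
  "tail_integral n R h = (\<integral>\<^sup>+x. h x * kernel_tail n R x \<partial>M)"

lemma upow_on_measurable[measurable]:
  assumes [measurable]: "B \<in> sets M"
  shows "upow_on B \<in> borel_measurable M"
  unfolding upow_on_def by measurable

lemma diag_block_measurable[measurable]:
  assumes [measurable]: "B \<in> sets M"
  shows "diag_block B \<in> borel_measurable (M \<Otimes>\<^sub>M M)"
  unfolding diag_block_def by measurable

lemma ennreal_abs_diff_powr_le:
  assumes "d > 0"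
  shows "ennreal (\<bar>a - b\<bar> powr p) \<le> convex_weight d * ennreal (\<bar>a\<bar> powr p) + convex_weight (1/d) * ennreal (\<bar>b\<bar> powr p)"
proof -
  have "ennreal (\<bar>a - b\<bar> powr p)
      \<le> ennreal ((1 + d) powr (p - 1) * \<bar>a\<bar> powr p + (1 + 1/d) powr (p - 1) * \<bar>b\<bar> powr p)"
    by (rule ennreal_leI abs_diff_powr_le_weighted[OF p_ge_1 assms])+
  then show ?thesis
    by (simp add: convex_weight_def ennreal_mult)
qed

lemma dpow_le_convex_weight:
  "d > 0 \<Longrightarrow> dpow (x, y) \<le> convex_weight d * upow x + convex_weight (1/d) * upow y"
  unfolding dpow_def upow_def by (simp add: ennreal_abs_diff_powr_le)

lemma upow_le_convex_weight:
  "d > 0 \<Longrightarrow> upow x \<le> convex_weight d * dpow (x, y) + convex_weight (1/d) * upow y"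
  unfolding dpow_def upow_def using ennreal_abs_diff_powr_le[of d "u x - u y" "- u y"] by simp

lemma dpow_sym: "dpow (x, y) = dpow (y, x)"
  by (simp add: dpow_def abs_minus_commute)

lemma convex_weight_finite[simp]: "convex_weight d \<noteq> top"
  by (simp add: convex_weight_def)

lemma convex_weight_mono: "0 < d \<Longrightarrow> d \<le> d' \<Longrightarrow> convex_weight d \<le> convex_weight d'"
  unfolding convex_weight_def using p_ge_1 by (intro ennreal_leI powr_mono2) auto

lemma convex_weight_tendsto_1: "(convex_weight \<longlongrightarrow> 1) (at_right 0)"
proof -
  have "((\<lambda>d. ennreal ((1 + d) powr (p - 1))) \<longlongrightarrow> ennreal ((1 + 0) powr (p - 1))) (at_right 0)"
    by (intro tendsto_ennrealI tendsto_intros) auto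
  then show ?thesis
    by (simp add: convex_weight_def[abs_def])
qed

lemma far_integrand_le:
  fixes B :: "'a set"
  assumes R: "R > 0" and d: "0 < d" "d \<le> 1"
  defines "h \<equiv> \<lambda>x. convex_weight d * upow_on B x + convex_weight (1/d) * upow_on (- B) x"
  shows "dpow z * far_kernel n R z
    \<le> far_kernel n R z * (h (fst z) + h (snd z)) + ennreal (rt n R) * (convex_weight 1 * diag_block B z)"
proof -
  obtain x y where z: "z = (x, y)"
    by (cases z)
  let ?K = "far_kernel n R (x, y)"
  have ab: "convex_weight d \<le> convex_weight (1/d)"
    using d by (intro convex_weight_mono) (auto simp: field_simps intro: mult_le_one)
  consider "x \<in> B" "y \<in> B" | "x \<in> B" "y \<notin> B" | "x \<notin> B" "y \<in> B" | "x \<notin> B" "y \<notin> B"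
    by blast
  then show ?thesis
  proof cases
    case 1
    have "dpow (x, y) * ?K \<le> (convex_weight 1 * upow x + convex_weight 1 * upow y) * ennreal (rt n R)"
      using dpow_le_convex_weight[of 1 x y] far_kernel_le[OF R] by (intro mult_mono) auto
    also have "\<dots> \<le> ?K * (h x + h y) + ennreal (rt n R) * (convex_weight 1 * diag_block B (x, y))"
      using 1 by (simp add: diag_block_def distrib_left ac_simps add_increasing)
    finally show ?thesis
      by (simp add: z)
  next
    case 2
    have "dpow (x, y) * ?K \<le> (convex_weight d * upow x + convex_weight (1/d) * upow y) * ?K"
      by (rule mult_right_mono[OF dpow_le_convex_weight[OF d(1)]]) simp
    also have "\<dots> = ?K * (h x + h y) + ennreal (rt n R) * (convex_weight 1 * diag_block B (x, y))"
      using 2 by (simp add: h_def upow_on_def diag_block_def ac_simps)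
    finally show ?thesis
      by (simp add: z)
  next
    case 3
    have "dpow (x, y) * ?K \<le> (convex_weight d * upow y + convex_weight (1/d) * upow x) * ?K"
      by (subst dpow_sym, rule mult_right_mono[OF dpow_le_convex_weight[OF d(1)]]) simp
    also have "\<dots> = ?K * (h x + h y) + ennreal (rt n R) * (convex_weight 1 * diag_block B (x, y))"
      using 3 by (simp add: h_def upow_on_def diag_block_def ac_simps)
    finally show ?thesis
      by (simp add: z)
  next
    case 4
    have "dpow (x, y) \<le> convex_weight (1/d) * upow x + convex_weight (1/d) * upow y"
      using dpow_le_convex_weight[OF d(1), of x y] mult_right_mono[OF ab, of "upow x"]
      by (meson add_right_mono order_trans zero_le)
    then have "dpow (x, y) * ?K \<le> (convex_weight (1/d) * upow x + convex_weight (1/d) * upow y) * ?K"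
      by (rule mult_right_mono) simp
    also have "\<dots> = ?K * (h x + h y) + ennreal (rt n R) * (convex_weight 1 * diag_block B (x, y))"
      using 4 by (simp add: h_def upow_on_def diag_block_def ac_simps)
    finally show ?thesis
      by (simp add: z)
  qed
qed

lemma far_integrand_ge:
  fixes B :: "'a set"
  assumes R: "R > 0" and d: "0 < d"
  defines "g \<equiv> \<lambda>x. convex_weight (1/d) * upow_on (- B) x"
  shows "far_kernel n R z * (upow_on B (fst z) + upow_on B (snd z))
    \<le> convex_weight d * (dpow z * far_kernel n R z) + far_kernel n R z * (g (fst z) + g (snd z))
      + ennreal (rt n R) * diag_block B z"
proof -
  obtain x y where z: "z = (x, y)"
    by (cases z)
  let ?K = "far_kernel n R (x, y)"
  consider "x \<in> B" "y \<in> B" | "x \<in> B" "y \<notin> B" | "x \<notin> B" "y \<in> B" | "x \<notin> B" "y \<notin> B"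
    by blast
  then show ?thesis
  proof cases
    case 1
    have "?K * (upow x + upow y) \<le> ennreal (rt n R) * (upow x + upow y)"
      using far_kernel_le[OF R] by (rule mult_right_mono) simp
    also have "\<dots> \<le> convex_weight d * (dpow (x, y) * ?K) + ?K * (g x + g y) + ennreal (rt n R) * diag_block B (x, y)"
      using 1 by (simp add: g_def upow_on_def diag_block_def add_increasing)
    finally show ?thesis
      using 1 by (simp add: z upow_on_def)
  next
    case 2
    have "?K * upow x \<le> ?K * (convex_weight d * dpow (x, y) + convex_weight (1/d) * upow y)"
      by (rule mult_left_mono[OF upow_le_convex_weight[OF d]]) simp
    also have "\<dots> = convex_weight d * (dpow (x, y) * ?K) + ?K * (g x + g y) + ennreal (rt n R) * diag_block B (x, y)"
      using 2 by (simp add: g_def upow_on_def diag_block_def distrib_left ac_simps)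
    finally show ?thesis
      using 2 by (simp add: z upow_on_def)
  next
    case 3
    have "?K * upow y \<le> ?K * (convex_weight d * dpow (x, y) + convex_weight (1/d) * upow x)"
      by (subst dpow_sym, rule mult_left_mono[OF upow_le_convex_weight[OF d]]) simp
    also have "\<dots> = convex_weight d * (dpow (x, y) * ?K) + ?K * (g x + g y) + ennreal (rt n R) * diag_block B (x, y)"
      using 3 by (simp add: g_def upow_on_def diag_block_def distrib_left ac_simps)
    finally show ?thesis
      using 3 by (simp add: z upow_on_def)
  qed (simp add: z upow_on_def)
qed

lemma far_kernel_pair_integral:
  assumes "R \<ge> 0" "h \<in> borel_measurable M"
  shows "(\<integral>\<^sup>+z. far_kernel n R z * (h (fst z) + h (snd z)) \<partial>(M \<Otimes>\<^sub>M M)) = 2 * tail_integral n R h"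
  unfolding tail_integral_def kernel_tail_def
  using assms by (intro nn_integral_symmetric_kernel far_kernel_sym) auto

lemma tail_integral_add_cmult:
  assumes [measurable]: "f \<in> borel_measurable M" "g \<in> borel_measurable M" and R: "R \<ge> 0"
  shows "tail_integral n R (\<lambda>x. a * f x + b * g x) = a * tail_integral n R f + b * tail_integral n R g"
  unfolding tail_integral_def using R
  by (simp add: distrib_right mult.assoc nn_integral_add nn_integral_cmult)

lemma upow_on_integral_le: "integral\<^sup>N M (upow_on B) \<le> integral\<^sup>N M upow"
  unfolding upow_on_def by (intro nn_integral_mono) (auto split: split_indicator)

lemma diag_block_integral_finite:
  assumes [measurable]: "B \<in> sets M" and fin: "emeasure M B < \<infinity>"
  shows "integral\<^sup>N (M \<Otimes>\<^sub>M M) (diag_block B) < \<infinity>"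
proof -
  have "integral\<^sup>N (M \<Otimes>\<^sub>M M) (diag_block B)
      = 2 * (\<integral>\<^sup>+x. upow x * (\<integral>\<^sup>+y. indicator B x * indicator B y \<partial>M) \<partial>M)"
    unfolding diag_block_def[abs_def]
    using nn_integral_symmetric_kernel[where k="\<lambda>z. indicator B (fst z) * indicator B (snd z)" and h=upow]
    by (simp add: ac_simps)
  also have "\<dots> = 2 * (\<integral>\<^sup>+x. upow_on B x * emeasure M B \<partial>M)"
    using assms(1) by (simp add: upow_on_def mult.assoc nn_integral_cmult_indicator)
  also have "\<dots> = 2 * (integral\<^sup>N M (upow_on B) * emeasure M B)"
    by (subst nn_integral_multc) auto
  also have "\<dots> < \<infinity>"
    using order_le_less_trans[OF upow_on_integral_le Lp_norm_pow_finite] fin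
    by (simp add: ennreal_mult_less_top)
  finally show ?thesis .
qed

lemma tail_integral_le:
  assumes "\<And>x. kernel_tail n R x \<le> C" "h \<in> borel_measurable M"
  shows "tail_integral n R h \<le> integral\<^sup>N M h * C"
proof -
  have "tail_integral n R h \<le> (\<integral>\<^sup>+x. h x * C \<partial>M)"
    unfolding tail_integral_def using assms(1) by (intro nn_integral_mono mult_left_mono) auto
  then show ?thesis
    using assms(2) by (simp only: nn_integral_multc)
qed

lemma tail_integral_tendsto:
  assumes R: "R > 0" and h[measurable]: "h \<in> borel_measurable M" "integral\<^sup>N M h < \<infinity>"
    and bounded: "eventually (\<lambda>n. \<forall>x. kernel_tail n R x \<le> C) sequentially" and C: "C < \<infinity>"
  shows "(\<lambda>n. tail_integral n R h) \<longlonglongrightarrow> integral\<^sup>N M h * A"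
proof -
  obtain N where N: "\<And>n x. n \<ge> N \<Longrightarrow> kernel_tail n R x \<le> C"
    using bounded by (auto simp: eventually_sequentially)
  have [measurable]: "kernel_tail n R \<in> borel_measurable M" for n
    using R by simp
  have "(\<lambda>n. \<integral>\<^sup>+x. h x * kernel_tail (n + N) R x \<partial>M) \<longlonglongrightarrow> (\<integral>\<^sup>+x. h x * A \<partial>M)"
  proof (rule nn_integral_dominated_convergence[where w="\<lambda>x. h x * C"])
    show "AE x in M. h x * kernel_tail (n + N) R x \<le> h x * C" for n
      by (intro AE_I2 mult_left_mono N) auto
    show "(\<integral>\<^sup>+x. h x * C \<partial>M) < \<infinity>"
      using nn_integral_multc[OF h(1), of C] h(2) C by (simp add: ennreal_mult_less_top)
    show "AE x in M. (\<lambda>n. h x * kernel_tail (n + N) R x) \<longlonglongrightarrow> h x * A"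
    proof (rule AE_mp[OF nn_integral_PInf_AE[OF h(1) less_imp_neq[OF h(2)]]], intro AE_I2 impI)
      fix x assume "h x \<noteq> \<infinity>"
      have "(\<lambda>n. kernel_tail (n + N) R x) \<longlonglongrightarrow> A"
        by (rule LIMSEQ_ignore_initial_segment[OF kernel_tail_tendsto[OF R]])
      then show "(\<lambda>n. h x * kernel_tail (n + N) R x) \<longlonglongrightarrow> h x * A"
        by (rule tendsto_mult_ennreal[OF tendsto_const]) (use \<open>h x \<noteq> \<infinity>\<close> AVR_finite in auto)
    qed
  qed measurable
  then show ?thesis
    unfolding tail_integral_def nn_integral_multc[OF h(1)] by (rule LIMSEQ_offset)
qed

lemma far_energy_le:
  assumes R: "R > 0" and d: "0 < d" "d \<le> 1" and B[measurable]: "B \<in> sets M"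
  shows "far_energy n R \<le> 2 * (convex_weight d * tail_integral n R (upow_on B)
      + convex_weight (1/d) * tail_integral n R (upow_on (- B)))
    + ennreal (rt n R) * (convex_weight 1 * integral\<^sup>N (M \<Otimes>\<^sub>M M) (diag_block B))"
proof -
  define h where "h x = convex_weight d * upow_on B x + convex_weight (1/d) * upow_on (- B) x" for x
  have [measurable]: "h \<in> borel_measurable M"
    unfolding h_def by measurable
  have "far_energy n R \<le> (\<integral>\<^sup>+z. far_kernel n R z * (h (fst z) + h (snd z))
      + ennreal (rt n R) * (convex_weight 1 * diag_block B z) \<partial>(M \<Otimes>\<^sub>M M))"
    unfolding far_energy_def h_def using R d by (intro nn_integral_mono far_integrand_le)
  also have "\<dots> = 2 * tail_integral n R h + ennreal (rt n R) * (convex_weight 1 * integral\<^sup>N (M \<Otimes>\<^sub>M M) (diag_block B))"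
    using R by (simp add: nn_integral_add nn_integral_cmult far_kernel_pair_integral)
  also have "tail_integral n R h = convex_weight d * tail_integral n R (upow_on B)
      + convex_weight (1/d) * tail_integral n R (upow_on (- B))"
    unfolding h_def using R by (intro tail_integral_add_cmult) auto
  finally show ?thesis .
qed

lemma far_energy_ge:
  assumes R: "R > 0" and d: "0 < d" and B[measurable]: "B \<in> sets M"
  shows "2 * tail_integral n R (upow_on B)
    \<le> convex_weight d * far_energy n R + 2 * (convex_weight (1/d) * tail_integral n R (upow_on (- B)))
      + ennreal (rt n R) * integral\<^sup>N (M \<Otimes>\<^sub>M M) (diag_block B)"
proof -
  define g where "g x = convex_weight (1/d) * upow_on (- B) x" for x
  have [measurable]: "g \<in> borel_measurable M"
    unfolding g_def by measurable
  have "2 * tail_integral n R (upow_on B) = (\<integral>\<^sup>+z. far_kernel n R z * (upow_on B (fst z) + upow_on B (snd z)) \<partial>(M \<Otimes>\<^sub>M M))"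
    using R by (simp add: far_kernel_pair_integral)
  also have "\<dots> \<le> (\<integral>\<^sup>+z. convex_weight d * (dpow z * far_kernel n R z) + far_kernel n R z * (g (fst z) + g (snd z))
      + ennreal (rt n R) * diag_block B z \<partial>(M \<Otimes>\<^sub>M M))"
    unfolding g_def using R d by (intro nn_integral_mono far_integrand_ge)
  also have "\<dots> = convex_weight d * far_energy n R + 2 * tail_integral n R g
      + ennreal (rt n R) * integral\<^sup>N (M \<Otimes>\<^sub>M M) (diag_block B)"
    unfolding far_energy_def using R by (simp add: nn_integral_add nn_integral_cmult far_kernel_pair_integral)
  also have "tail_integral n R g = convex_weight (1/d) * tail_integral n R (upow_on (- B))"
    unfolding g_def tail_integral_def using R by (simp add: nn_integral_cmult mult.assoc)
  finally show ?thesis .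
qed

lemma upow_on_ball_tendsto:
  shows "(\<lambda>m. integral\<^sup>N M (upow_on (ball x0 (real m)))) \<longlonglongrightarrow> integral\<^sup>N M upow"
    and "(\<lambda>m. integral\<^sup>N M (upow_on (- ball x0 (real m)))) \<longlonglongrightarrow> 0"
  using nn_integral_ball_exhaustion[OF upow_measurable sets_M Lp_norm_pow_finite, of x0]
  by (simp_all add: upow_on_def[abs_def])

lemma upow_on_integral_finite: "integral\<^sup>N M (upow_on B) < \<infinity>"
  using upow_on_integral_le Lp_norm_pow_finite by (rule le_less_trans)

context
  fixes R :: real and C :: ennreal
  assumes R_pos: "R > 0"
    and tail_bounded: "eventually (\<lambda>n. \<forall>x. kernel_tail n R x \<le> C) sequentially"
    and C_finite: "C < \<infinity>"
begin

lemma tail_integral_upow_on_tendsto: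
  "B \<in> sets M \<Longrightarrow> (\<lambda>n. tail_integral n R (upow_on B)) \<longlonglongrightarrow> integral\<^sup>N M (upow_on B) * A"
  using R_pos tail_bounded C_finite upow_on_integral_finite by (intro tail_integral_tendsto) auto

lemma tail_integral_upow_on_le:
  "B \<in> sets M \<Longrightarrow> eventually (\<lambda>n. tail_integral n R (upow_on B) \<le> integral\<^sup>N M (upow_on B) * C) sequentially"
  using tail_bounded by eventually_elim (intro tail_integral_le, auto)

lemma Limsup_far_energy_le_split:
  assumes d: "0 < d" "d \<le> 1" and B[measurable]: "B \<in> sets M" "emeasure M B < \<infinity>"
  shows "Limsup sequentially (\<lambda>n. far_energy n R) \<le> 2 * (convex_weight d * (integral\<^sup>N M (upow_on B) * A)
      + convex_weight (1/d) * (integral\<^sup>N M (upow_on (- B)) * C))"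
proof (rule Limsup_le_limit)
  let ?G = "integral\<^sup>N (M \<Otimes>\<^sub>M M) (diag_block B)"
  show "\<forall>\<^sub>F n in sequentially. far_energy n R \<le> 2 * (convex_weight d * tail_integral n R (upow_on B)
      + convex_weight (1/d) * (integral\<^sup>N M (upow_on (- B)) * C)) + ennreal (rt n R) * (convex_weight 1 * ?G)"
    using tail_integral_upow_on_le[OF compl_sets_M[OF B(1)]]
  proof eventually_elim
    case (elim n)
    then show ?case
      using far_energy_le[OF R_pos d B(1), of n]
      by (auto elim!: order_trans intro!: add_mono mult_left_mono)
  qed
  have "(\<lambda>n. 2 * (convex_weight d * tail_integral n R (upow_on B)
      + convex_weight (1/d) * (integral\<^sup>N M (upow_on (- B)) * C)) + ennreal (rt n R) * (convex_weight 1 * ?G))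
      \<longlonglongrightarrow> 2 * (convex_weight d * (integral\<^sup>N M (upow_on B) * A)
      + convex_weight (1/d) * (integral\<^sup>N M (upow_on (- B)) * C)) + 0 * (convex_weight 1 * ?G)"
    using upow_on_integral_finite[of B] AVR_finite diag_block_integral_finite[OF B] R_pos
    by (intro tendsto_const tendsto_add tendsto_mult_ennreal[OF tendsto_const]
        tendsto_mult_ennreal[OF ennreal_rt_tendsto_0 tendsto_const] tail_integral_upow_on_tendsto)
       (auto simp: ennreal_mult_eq_top_iff)
  then show "(\<lambda>n. 2 * (convex_weight d * tail_integral n R (upow_on B)
      + convex_weight (1/d) * (integral\<^sup>N M (upow_on (- B)) * C)) + ennreal (rt n R) * (convex_weight 1 * ?G))
      \<longlonglongrightarrow> 2 * (convex_weight d * (integral\<^sup>N M (upow_on B) * A)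
      + convex_weight (1/d) * (integral\<^sup>N M (upow_on (- B)) * C))"
    by simp
qed simp

lemma Liminf_far_energy_ge_split:
  assumes d: "0 < d" and B[measurable]: "B \<in> sets M" "emeasure M B < \<infinity>"
  shows "2 * (integral\<^sup>N M (upow_on B) * A) \<le> convex_weight d * Liminf sequentially (\<lambda>n. far_energy n R)
      + 2 * (convex_weight (1/d) * (integral\<^sup>N M (upow_on (- B)) * C))"
proof -
  let ?G = "integral\<^sup>N (M \<Otimes>\<^sub>M M) (diag_block B)"
  have "2 * (integral\<^sup>N M (upow_on B) * A) \<le> Liminf sequentially (\<lambda>n. convex_weight d * far_energy n R)
      + (2 * (convex_weight (1/d) * (integral\<^sup>N M (upow_on (- B)) * C)) + 0 * ?G)"
  proof (rule limit_le_Liminf_add_ennreal)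
    show "\<forall>\<^sub>F n in sequentially. 2 * tail_integral n R (upow_on B) \<le> convex_weight d * far_energy n R
        + (2 * (convex_weight (1/d) * (integral\<^sup>N M (upow_on (- B)) * C)) + ennreal (rt n R) * ?G)"
      using tail_integral_upow_on_le[OF compl_sets_M[OF B(1)]]
    proof eventually_elim
      case (elim n)
      then show ?case
        using far_energy_ge[OF R_pos d B(1), of n]
        by (auto simp: add.assoc elim!: order_trans intro!: add_mono mult_left_mono)
    qed
    show "(\<lambda>n. 2 * tail_integral n R (upow_on B)) \<longlonglongrightarrow> 2 * (integral\<^sup>N M (upow_on B) * A)"
      using upow_on_integral_finite[of B] AVR_finite
      by (intro tendsto_mult_ennreal[OF tendsto_const tail_integral_upow_on_tendsto[OF B(1)]])
         (auto simp: ennreal_mult_eq_top_iff)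
    show "(\<lambda>n. 2 * (convex_weight (1/d) * (integral\<^sup>N M (upow_on (- B)) * C)) + ennreal (rt n R) * ?G)
        \<longlonglongrightarrow> 2 * (convex_weight (1/d) * (integral\<^sup>N M (upow_on (- B)) * C)) + 0 * ?G"
      using diag_block_integral_finite[OF B] R_pos
      by (intro tendsto_add tendsto_const tendsto_mult_ennreal[OF ennreal_rt_tendsto_0 tendsto_const])
         auto
  qed simp
  then show ?thesis
    using Liminf_cmult_ennreal[of sequentially "convex_weight d"] by (simp add: less_top[symmetric])
qed

lemma Limsup_far_energy_le: "Limsup sequentially (\<lambda>n. far_energy n R) \<le> 2 * A * integral\<^sup>N M upow"
proof -
  obtain x0 :: 'a where True by simp
  let ?I = "integral\<^sup>N M upow"
  have bound: "Limsup sequentially (\<lambda>n. far_energy n R) \<le> 2 * (convex_weight d * (?I * A))"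
    if d: "0 < d" "d \<le> 1" for d
  proof (rule tendsto_lowerbound)
    show "\<forall>\<^sub>F m in sequentially. Limsup sequentially (\<lambda>n. far_energy n R)
        \<le> 2 * (convex_weight d * (integral\<^sup>N M (upow_on (ball x0 (real m))) * A)
          + convex_weight (1/d) * (integral\<^sup>N M (upow_on (- ball x0 (real m))) * C))"
      using d emeasure_ball_finite by (intro always_eventually allI Limsup_far_energy_le_split) auto
    have "(\<lambda>m. 2 * (convex_weight d * (integral\<^sup>N M (upow_on (ball x0 (real m))) * A)
          + convex_weight (1/d) * (integral\<^sup>N M (upow_on (- ball x0 (real m))) * C)))
        \<longlonglongrightarrow> 2 * (convex_weight d * (?I * A) + convex_weight (1/d) * (0 * C))"
      using Lp_norm_pow_finite AVR_finite C_finite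
      by (intro tendsto_const tendsto_add tendsto_mult_ennreal[OF tendsto_const]
          tendsto_mult_ennreal[OF upow_on_ball_tendsto(1) tendsto_const]
          tendsto_mult_ennreal[OF upow_on_ball_tendsto(2) tendsto_const])
         (auto simp: ennreal_mult_eq_top_iff)
    then show "(\<lambda>m. 2 * (convex_weight d * (integral\<^sup>N M (upow_on (ball x0 (real m))) * A)
          + convex_weight (1/d) * (integral\<^sup>N M (upow_on (- ball x0 (real m))) * C)))
        \<longlonglongrightarrow> 2 * (convex_weight d * (?I * A))"
      by simp
  qed simp
  have "((\<lambda>d. 2 * (convex_weight d * (?I * A))) \<longlongrightarrow> 2 * (1 * (?I * A))) (at_right 0)"
    using Lp_norm_pow_finite AVR_finite
    by (intro tendsto_mult_ennreal[OF tendsto_const] tendsto_mult_ennreal[OF convex_weight_tendsto_1 tendsto_const])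
       (auto simp: ennreal_mult_eq_top_iff)
  moreover have "\<forall>\<^sub>F d in at_right 0. Limsup sequentially (\<lambda>n. far_energy n R) \<le> 2 * (convex_weight d * (?I * A))"
    by (rule eventually_at_rightI[where b=1]) (auto intro: bound)
  ultimately have "Limsup sequentially (\<lambda>n. far_energy n R) \<le> 2 * (1 * (?I * A))"
    by (rule tendsto_lowerbound) simp
  then show ?thesis
    by (simp add: ac_simps)
qed

lemma Liminf_far_energy_ge: "2 * A * integral\<^sup>N M upow \<le> Liminf sequentially (\<lambda>n. far_energy n R)"
proof -
  obtain x0 :: 'a where True by simp
  let ?I = "integral\<^sup>N M upow" and ?E = "Liminf sequentially (\<lambda>n. far_energy n R)"
  have bound: "2 * (?I * A) \<le> convex_weight d * ?E" if d: "0 < d" for d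
  proof (rule tendsto_le)
    show "\<forall>\<^sub>F m in sequentially. 2 * (integral\<^sup>N M (upow_on (ball x0 (real m))) * A)
        \<le> convex_weight d * ?E + 2 * (convex_weight (1/d) * (integral\<^sup>N M (upow_on (- ball x0 (real m))) * C))"
      using d emeasure_ball_finite by (intro always_eventually allI Liminf_far_energy_ge_split) auto
    have "(\<lambda>m. convex_weight d * ?E + 2 * (convex_weight (1/d) * (integral\<^sup>N M (upow_on (- ball x0 (real m))) * C)))
        \<longlonglongrightarrow> convex_weight d * ?E + 2 * (convex_weight (1/d) * (0 * C))"
      using C_finite
      by (intro tendsto_const tendsto_add tendsto_mult_ennreal[OF tendsto_const]
          tendsto_mult_ennreal[OF upow_on_ball_tendsto(2) tendsto_const]) (auto simp: ennreal_mult_eq_top_iff)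
    then show "(\<lambda>m. convex_weight d * ?E + 2 * (convex_weight (1/d) * (integral\<^sup>N M (upow_on (- ball x0 (real m))) * C)))
        \<longlonglongrightarrow> convex_weight d * ?E"
      by simp
    show "(\<lambda>m. 2 * (integral\<^sup>N M (upow_on (ball x0 (real m))) * A)) \<longlonglongrightarrow> 2 * (?I * A)"
      using Lp_norm_pow_finite AVR_finite
      by (intro tendsto_mult_ennreal[OF tendsto_const] tendsto_mult_ennreal[OF upow_on_ball_tendsto(1) tendsto_const])
         (auto simp: ennreal_mult_eq_top_iff)
  qed simp
  have "((\<lambda>d. convex_weight d * ?E) \<longlongrightarrow> 1 * ?E) (at_right 0)"
    by (intro tendsto_mult_ennreal[OF convex_weight_tendsto_1 tendsto_const]) auto
  moreover have "\<forall>\<^sub>F d in at_right 0. 2 * (?I * A) \<le> convex_weight d * ?E"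
    by (rule eventually_at_rightI[where b=1]) (auto intro: bound)
  ultimately have "2 * (?I * A) \<le> 1 * ?E"
    by (rule tendsto_lowerbound) simp
  then show ?thesis
    by (simp add: ac_simps)
qed

lemma far_energy_tendsto: "(\<lambda>n. far_energy n R) \<longlonglongrightarrow> 2 * A * integral\<^sup>N M upow"
  using Limsup_far_energy_le Liminf_far_energy_ge by (rule tendsto_of_Limsup_le_Liminf[rotated]) simp

end

lemma energy_tendsto:
  assumes fin: "energy M p (\<rho> m) u < \<infinity>"
  shows "(\<lambda>n. energy M p (\<rho> n) u) \<longlonglongrightarrow> 2 * A * Lp_norm_pow M p u"
proof -
  have "\<forall>\<^sub>F R in at_top. L R < 2"
    by (rule order_tendstoD(2)[OF L_tendsto_1]) simp
  then have "\<forall>\<^sub>F R in at_top. R \<ge> R0 \<and> (\<lambda>n. S_rt_tail n R) \<longlonglongrightarrow> L R \<and> L R < 2"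
    using eventually_ge_at_top[of R0] eventually_S_rt_tail_tendsto
    by eventually_elim auto
  then obtain R where R: "R \<ge> R0" "(\<lambda>n. S_rt_tail n R) \<longlonglongrightarrow> L R" "L R < 2"
    by (auto simp: eventually_at_top_linorder)
  have "R > 0"
    using R(1) R0_pos by simp
  have "near_energy m R < \<infinity>"
    using fin energy_split[OF \<open>R > 0\<close>, of m] by (auto simp: order_le_less_trans)
  then have "(\<lambda>n. near_energy n R) \<longlonglongrightarrow> 0"
    by (rule near_energy_tendsto_0[OF \<open>R > 0\<close>])
  moreover have "(\<lambda>n. far_energy n R) \<longlonglongrightarrow> 2 * A * integral\<^sup>N M upow"
    by (rule far_energy_tendsto[OF \<open>R > 0\<close> kernel_tail_eventually_bounded[OF R]])
       (simp add: ennreal_mult_less_top)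
  ultimately have "(\<lambda>n. near_energy n R + far_energy n R) \<longlonglongrightarrow> 0 + 2 * A * integral\<^sup>N M upow"
    by (rule tendsto_add)
  then show ?thesis
    by (simp add: energy_split[OF \<open>R > 0\<close>] Lp_norm_pow_eq)
qed

end

lemma admissible_V_DERIV:
  assumes "admissible_V V S" "t > 0"
  shows "(V has_real_derivative S t) (at t)"
proof -
  have "(V has_real_derivative S t) (at t within {0..})"
    using assms unfolding admissible_V_def by simp
  then have "(V has_real_derivative S t) (at t within {0<..})"
    by (rule DERIV_subset) auto
  then show ?thesis
    using at_within_open[of t "{0<..}"] assms(2) by simp
qed

lemma radial_profile_of_approx_identity:
  assumes V: "admissible_V V S" and \<rho>: "approx_identity_radial V S \<rho>"
  obtains rt D L where "radial_profile V S rt D L" "\<And>n x y. x \<noteq> y \<Longrightarrow> \<rho> n x y = rt n (dist x y)"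
proof -
  obtain rt L where rt: "\<forall>n. rt n C1_differentiable_on {0<..}"
      "\<forall>n r s. 0 < r \<longrightarrow> r < s \<longrightarrow> rt n s < rt n r"
      "\<forall>r>0. (\<lambda>n. rt n r) \<longlonglongrightarrow> 0"
      "\<forall>n. ((\<lambda>r. rt n r * V r) \<longlongrightarrow> 0) at_top"
      "\<forall>n x y. x \<noteq> y \<longrightarrow> \<rho> n x y = rt n (dist x y)"
      "\<forall>n m. n > m \<longrightarrow> mono_on {0<..} (\<lambda>r. rt n r / rt m r)"
      "\<forall>\<^sub>F R in at_top. ((\<lambda>n. \<integral>\<^sup>+ r. ennreal (S r * rt n r) * indicator {R..} r \<partial>lborel) \<longlongrightarrow> L R) sequentially"
      "(L \<longlongrightarrow> 1) at_top"
    using \<rho> unfolding approx_identity_radial_def by (elim exE conjE) (rule that; assumption)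
  obtain D where D: "\<forall>n. (\<forall>t\<in>{0<..}. (rt n has_vector_derivative D n t) (at t)) \<and> continuous_on {0<..} (D n)"
    using choice[OF rt(1)[unfolded C1_differentiable_on_def]] by (elim exE) (rule that)
  have "radial_profile V S rt D L"
  proof
    show "V t \<ge> 0" if "t \<ge> 0" for t
      using V that by (simp add: admissible_V_def)
    show "(V has_real_derivative S t) (at t)" if "t > 0" for t
      using V that by (rule admissible_V_DERIV)
    show "continuous_on {0<..} S"
      using V unfolding admissible_V_def by (auto intro: continuous_on_subset)
    show "strict_mono_on {0..} V"
      using V by (simp add: admissible_V_def)
    show "(rt n has_real_derivative D n t) (at t)" if "t > 0" for n t
      using D that by (simp add: has_real_derivative_iff_has_vector_derivative)
    show "continuous_on {0<..} (D n)" for n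
      using D by simp
    show "rt n s < rt n r" if "0 < r" "r < s" for n r s
      using rt(2) that by simp
    show "(\<lambda>n. rt n r) \<longlonglongrightarrow> 0" if "r > 0" for r
      using rt(3) that by simp
    show "((\<lambda>r. rt n r * V r) \<longlongrightarrow> 0) at_top" for n
      using rt(4) by simp
    show "mono_on {0<..} (\<lambda>r. rt n r / rt m r)" if "m < n" for n m
      using rt(6) that by simp
  qed (fact rt(7,8))+
  with rt(5) show ?thesis
    using that by blast
qed

theorem mainTheorem4:
  fixes M :: "('a::{polish_space,metric_space}) measure"
    and V S :: "real \<Rightarrow> real"
    and AVR :: ennreal
    and \<rho> :: "nat \<Rightarrow> 'a \<Rightarrow> 'a \<Rightarrow> real"
    and p :: real
    and u :: "'a \<Rightarrow> real"
    and n0 :: nat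
  assumes "admissible_V V S"
    and "mms M"
    and "has_AVR M V AVR"
    and "\<exists>k>0. \<exists>R. \<forall>r\<ge>R. \<forall>x. emeasure M (ball x r) \<le> ennreal (k * V r)"
    and "approx_identity_radial V S \<rho>"
    and "p \<ge> 1"
    and "in_Lp M p u"
    and "energy M p (\<rho> n0) u < \<infinity>"
  shows "(\<lambda>n. energy M p (\<rho> n) u) \<longlonglongrightarrow> 2 * AVR * Lp_norm_pow M p u"
proof -
  obtain rt D L where profile: "radial_profile V S rt D L"
    and \<rho>: "\<And>n x y. x \<noteq> y \<Longrightarrow> \<rho> n x y = rt n (dist x y)"
    using radial_profile_of_approx_identity[OF assms(1,5)] by blast
  obtain k R where k: "k > 0" and growth: "\<And>r x. r \<ge> R \<Longrightarrow> emeasure M (ball x r) \<le> ennreal (k * V r)"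
    using assms(4) by blast
  interpret radial_energy V S rt D L M AVR k "max R 1" \<rho> u p
  proof (intro radial_energy.intro radial_volume.intro radial_volume_axioms.intro radial_energy_axioms.intro profile)
    show "sets M = sets borel"
      using assms(2) by (simp add: mms_def)
    show "((\<lambda>r. emeasure M (ball x r) / ennreal (V r)) \<longlongrightarrow> AVR) at_top" for x
      using assms(3) by (simp add: has_AVR_def)
    show "emeasure M (ball x r) \<le> ennreal (k * V r)" if "max R 1 \<le> r" for r x
      using growth that by simp
  qed (fact k \<rho> assms(6,7) | simp)+
  show ?thesis
    by (rule energy_tendsto[OF assms(8)])
qed

end
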